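(* Let $1<p<3$ and $r=\min(1+1/p,3/p)$. Let $\alpha=(\alpha^+,0,\dots,0)\in[0,\infty)^n$ with $\alpha^+\in(0,\infty)^l$, $A=\Lambda_\alpha$, and let $\Gamma_0$ be a circle in $\mathbb{C}$ enclosing $0$ but no entry of $\alpha^+$. For Hermitian $\tilde E$ (small enough that $\Lambda_\alpha+\tilde E$ has no eigenvalue on $\Gamma_0$) let $P_0(\tilde E)=\frac{1}{2\pi i}\int_{\Gamma_0}(zI-(\Lambda_\alpha+\tilde E))^{-1}\,dz$. Let $Z$ be Hermitian positive semi-definite with $\operatorname{Ran} Z\subseteq \operatorname{Ker} A$, and let $b>0$ be an upper bound for both $\|\tilde E\|$ and $\|Z\|$. Then $$\big(P_0(\tilde E)ZP_0(\tilde E)\big)^{1/p}-Z^{1/p}=O(b^r),$$ where the size of the error is locally independent of $\alpha^+$ (the implicit constant and the range of small $b$ can be chosen uniformly for $\alpha^+$ in a neighborhood of the given one).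
   Context: $\Lambda_v$ denotes the diagonal matrix with the vector $v$ on its diagonal. Powers of Hermitian positive semi-definite matrices are defined via the spectral theorem by taking the power of the eigenvalues. $\|\cdot\|$ is any matrix norm. *)

theory Defs
  imports "HOL-Complex_Analysis.Complex_Analysis"
          "Jordan_Normal_Form.Schur_Decomposition"
          "Jordan_Normal_Form.Char_Poly"
begin

definition hermitian_mat :: "nat \<Rightarrow> complex mat \<Rightarrow> bool" where
  "hermitian_mat n A \<longleftrightarrow> A \<in> carrier_mat n n \<and> mat_adjoint A = A"

definition unitary_mat :: "nat \<Rightarrow> complex mat \<Rightarrow> bool" where
  "unitary_mat n U \<longleftrightarrow> U \<in> carrier_mat n n \<and> U * mat_adjoint U = 1\<^sub>m n
     \<and> mat_adjoint U * U = 1\<^sub>m n"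

definition psd_mat :: "nat \<Rightarrow> complex mat \<Rightarrow> bool" where
  "psd_mat n A \<longleftrightarrow> hermitian_mat n A \<and>
     (\<forall>v \<in> carrier_vec n. 0 \<le> Re (scalar_prod (conjugate v) (A *\<^sub>v v)))"

definition Lambda :: "nat \<Rightarrow> (nat \<Rightarrow> real) \<Rightarrow> complex mat" where
  "Lambda n v = mat_diag n (\<lambda>i. complex_of_real (v i))"

definition psd_power :: "nat \<Rightarrow> real \<Rightarrow> complex mat \<Rightarrow> complex mat" where
  "psd_power n s A = (SOME B. \<exists>U lam. unitary_mat n U \<and> (\<forall>i<n. 0 \<le> lam i)
      \<and> A = U * Lambda n lam * mat_adjoint U
      \<and> B = U * Lambda n (\<lambda>i. lam i powr s) * mat_adjoint U)"

definition mat_inv :: "nat \<Rightarrow> complex mat \<Rightarrow> complex mat" where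
  "mat_inv n M = (SOME B. B \<in> carrier_mat n n \<and> M * B = 1\<^sub>m n \<and> B * M = 1\<^sub>m n)"

definition riesz_proj :: "nat \<Rightarrow> complex \<Rightarrow> real \<Rightarrow> complex mat \<Rightarrow> complex mat" where
  "riesz_proj n c \<rho> M = Matrix.mat n n (\<lambda>(i,j).
      (1 / (2 * pi * \<i>)) * contour_integral (circlepath c \<rho>)
        (\<lambda>z. mat_inv n (z \<cdot>\<^sub>m 1\<^sub>m n - M) $$ (i,j)))"

(* Frobenius norm (all norms on n x n matrices are equivalent) *)
definition mnorm :: "nat \<Rightarrow> complex mat \<Rightarrow> real" where
  "mnorm n A = sqrt (\<Sum>i<n. \<Sum>j<n. (cmod (A $$ (i,j)))\<^sup>2)"

end

(*
  All estimates are entrywise, with constants depending only on n, s = 1/p and a spectral gap g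
  that is uniform for alpha^+ near the given one.

  Diagonalize Lambda_alpha + E = V diag(mu) V^*.  The Riesz projection is Q = V diag(chi) V^*, where
  chi_k indicates whether mu_k lies inside Gamma_0, and P = diag(alpha_i inside Gamma_0) is the
  projection onto Ker Lambda_alpha, so that P Z = Z P = Z.  Read entrywise, (Lambda_alpha + E) V =
  V diag(mu) says (mu_k - alpha_i) V_ik = (E V)_ik, so every entry V_ik joining an eigenvalue and a
  diagonal entry on opposite sides of Gamma_0 is O(b); hence Q - P = O(b) and P Q P - P = O(b^2).

  With X = Q Z Q and T = Q P,
    X^s - Z^s = X^s (Q - Q P) + (X^s T - T Z^s) + (Q - P) Z^s,
  and X^s, Z^s = O(b^s), so the outer terms are O(b^(1+s)).  The commutator X T - T Z = Q Z (P Q P - P)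
  is O(b^3); in the eigenbases of X and Z it becomes the matrix ((x_k - y_m) phi_km), and the Holder
  bound |x^s - y^s| <= |x - y|^s turns this into X^s T - T Z^s = O(b^(3 s)).
*)

theory Submission
  imports Defs "Jordan_Normal_Form.Spectral_Radius"
begin

lemma mat_adjoint_carrier [simp]:
  "(A :: complex mat) \<in> carrier_mat n m \<Longrightarrow> mat_adjoint A \<in> carrier_mat m n"
  unfolding mat_adjoint_def by (auto simp: mat_of_rows_def)

lemma mat_adjoint_dim [simp]:
  "dim_row (mat_adjoint (A :: complex mat)) = dim_col A"
  "dim_col (mat_adjoint (A :: complex mat)) = dim_row A"
  unfolding mat_adjoint_def by (auto simp: mat_of_rows_def)

lemma mat_adjoint_index [simp]:
  "i < dim_col A \<Longrightarrow> j < dim_row A \<Longrightarrow> mat_adjoint (A :: complex mat) $$ (i, j) = cnj (A $$ (j, i))"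
  unfolding mat_adjoint_def by (auto simp: mat_of_rows_def)

lemma mat_adjoint_adjoint [simp]: "mat_adjoint (mat_adjoint (A :: complex mat)) = A"
  by (rule eq_matI) auto

lemma index_mult_mat_sum:
  "A \<in> carrier_mat n m \<Longrightarrow> B \<in> carrier_mat m k \<Longrightarrow> i < n \<Longrightarrow> j < k \<Longrightarrow>
    (A * B) $$ (i, j) = (\<Sum>l<m. A $$ (i, l) * B $$ (l, j))"
  by (auto simp: scalar_prod_def atLeast0LessThan intro!: sum.cong)

lemma mat_adjoint_mult:
  assumes A: "(A :: complex mat) \<in> carrier_mat n m" and B: "B \<in> carrier_mat m k"
  shows "mat_adjoint (A * B) = mat_adjoint B * mat_adjoint A"
proof (rule eq_matI)
  fix i j assume "i < dim_row (mat_adjoint B * mat_adjoint A)" "j < dim_col (mat_adjoint B * mat_adjoint A)"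
  with A B have i: "i < k" and j: "j < n" by auto
  have "mat_adjoint (A * B) $$ (i, j) = cnj ((A * B) $$ (j, i))"
    using i j A B by simp
  also have "\<dots> = cnj (\<Sum>l<m. A $$ (j, l) * B $$ (l, i))"
    using i j A B by (subst index_mult_mat_sum[of _ n m _ k]) auto
  also have "\<dots> = (\<Sum>l<m. mat_adjoint B $$ (i, l) * mat_adjoint A $$ (l, j))"
    using i j A B by (auto simp: mult.commute intro!: sum.cong)
  also have "\<dots> = (mat_adjoint B * mat_adjoint A) $$ (i, j)"
    using i j A B by (simp add: index_mult_mat_sum[of _ k m _ n] del: index_mult_mat)
  finally show "mat_adjoint (A * B) $$ (i, j) = (mat_adjoint B * mat_adjoint A) $$ (i, j)" .
qed (use A B in auto)

lemma assoc_mult_mat_dims: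
  "dim_col A = dim_row B \<Longrightarrow> dim_col B = dim_row C \<Longrightarrow> A * B * C = A * (B * C)"
  by (rule assoc_mult_mat[of A "dim_row A" "dim_col A" B "dim_col B" C "dim_col C"]) auto

lemma Lambda_carrier [simp]: "Lambda n d \<in> carrier_mat n n"
  and Lambda_dim [simp]: "dim_row (Lambda n d) = n" "dim_col (Lambda n d) = n"
  unfolding Lambda_def mat_diag_def by auto

lemma Lambda_index:
  "i < n \<Longrightarrow> j < n \<Longrightarrow> Lambda n d $$ (i, j) = (if i = j then complex_of_real (d i) else 0)"
  unfolding Lambda_def mat_diag_def by auto

lemma mat_diag_dims [simp]: "dim_row (mat_diag n f) = n" "dim_col (mat_diag n f) = n"
  unfolding mat_diag_def by auto

lemma mat_diag_mult_index:
  "A \<in> carrier_mat n m \<Longrightarrow> i < n \<Longrightarrow> j < m \<Longrightarrow> (mat_diag n f * A) $$ (i, j) = f i * A $$ (i, j)"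
  by (simp add: mat_diag_mult_left)

lemma mult_mat_diag_index:
  "A \<in> carrier_mat m n \<Longrightarrow> i < m \<Longrightarrow> j < n \<Longrightarrow> (A * mat_diag n f) $$ (i, j) = A $$ (i, j) * f j"
  by (simp add: mat_diag_mult_right)

lemma conj_mat_diag_index:
  assumes "(U :: complex mat) \<in> carrier_mat n n" "i < n" "j < n"
  shows "(U * mat_diag n f * mat_adjoint U) $$ (i, j) = (\<Sum>k<n. U $$ (i, k) * f k * cnj (U $$ (j, k)))"
proof -
  have "(U * mat_diag n f * mat_adjoint U) $$ (i, j)
      = (\<Sum>k<n. (U * mat_diag n f) $$ (i, k) * mat_adjoint U $$ (k, j))"
    using assms by (intro index_mult_mat_sum) auto
  then show ?thesis
    using assms by (simp add: mult_mat_diag_index del: index_mult_mat)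
qed

lemma conj_mat_diag_mult:
  assumes "(U :: complex mat) \<in> carrier_mat n n" "mat_adjoint U * U = 1\<^sub>m n"
  shows "(U * mat_diag n f * mat_adjoint U) * (U * mat_diag n g * mat_adjoint U)
    = U * mat_diag n (\<lambda>k. f k * g k) * mat_adjoint U"
proof -
  from assms(1) have [simp]: "dim_row U = n" "dim_col U = n" by auto
  have "(U * mat_diag n f * mat_adjoint U) * (U * mat_diag n g * mat_adjoint U)
      = U * (mat_diag n f * (mat_adjoint U * U) * mat_diag n g) * mat_adjoint U"
    by (simp add: assoc_mult_mat_dims)
  then show ?thesis using assms by simp
qed

lemma mat_adjoint_conj_Lambda:
  assumes U: "U \<in> carrier_mat n n"
  shows "mat_adjoint (U * Lambda n d * mat_adjoint U) = U * Lambda n d * mat_adjoint U"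
proof (rule eq_matI)
  fix i j assume "i < dim_row (U * Lambda n d * mat_adjoint U)" "j < dim_col (U * Lambda n d * mat_adjoint U)"
  then have i: "i < n" and j: "j < n" using U by auto
  have "mat_adjoint (U * Lambda n d * mat_adjoint U) $$ (i, j) = cnj ((U * Lambda n d * mat_adjoint U) $$ (j, i))"
    using U i j by simp
  also have "\<dots> = (U * Lambda n d * mat_adjoint U) $$ (i, j)"
    unfolding Lambda_def conj_mat_diag_index[OF U i j] conj_mat_diag_index[OF U j i] cnj_sum
    by (intro sum.cong refl) (simp add: mult.commute mult.left_commute)
  finally show "mat_adjoint (U * Lambda n d * mat_adjoint U) $$ (i, j) = (U * Lambda n d * mat_adjoint U) $$ (i, j)" .
qed (use U in auto)

lemma unitary_mat_carrier: "unitary_mat n U \<Longrightarrow> U \<in> carrier_mat n n"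
  unfolding unitary_mat_def by auto

lemma unitary_matI:
  assumes "U \<in> carrier_mat n n" "U * mat_adjoint U = 1\<^sub>m n"
  shows "unitary_mat n U"
  using assms mat_mult_left_right_inverse[OF assms(1) mat_adjoint_carrier[OF assms(1)]]
  unfolding unitary_mat_def by auto

lemma unitary_mat_mult:
  assumes "unitary_mat n U" "unitary_mat n V"
  shows "unitary_mat n (U * V)"
proof (rule unitary_matI)
  have U: "U \<in> carrier_mat n n" and V: "V \<in> carrier_mat n n"
    using assms unitary_mat_carrier by auto
  then show "U * V \<in> carrier_mat n n" by simp
  have "U * V * mat_adjoint (U * V) = U * (V * mat_adjoint V) * mat_adjoint U"
    using U V by (simp add: mat_adjoint_mult[OF U V] assoc_mult_mat_dims)
  then show "U * V * mat_adjoint (U * V) = 1\<^sub>m n"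
    using assms U unfolding unitary_mat_def by simp
qed

lemma unitary_mat_rows:
  assumes "unitary_mat n U" "i < n" "j < n"
  shows "(\<Sum>k<n. U $$ (i, k) * cnj (U $$ (j, k))) = (if i = j then 1 else 0)"
proof -
  have "U \<in> carrier_mat n n" using assms unitary_mat_carrier by auto
  then have "(U * mat_adjoint U) $$ (i, j) = (\<Sum>k<n. U $$ (i, k) * cnj (U $$ (j, k)))"
    using assms by (subst index_mult_mat_sum[of _ n n _ n]) auto
  with assms show ?thesis unfolding unitary_mat_def by auto
qed

lemma unitary_mat_cols:
  assumes "unitary_mat n U" "i < n" "j < n"
  shows "(\<Sum>k<n. cnj (U $$ (k, i)) * U $$ (k, j)) = (if i = j then 1 else 0)"
proof -
  have "U \<in> carrier_mat n n" using assms unitary_mat_carrier by auto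
  then have "(mat_adjoint U * U) $$ (i, j) = (\<Sum>k<n. cnj (U $$ (k, i)) * U $$ (k, j))"
    using assms by (subst index_mult_mat_sum[of _ n n _ n]) auto
  with assms show ?thesis unfolding unitary_mat_def by auto
qed

lemma unitary_mat_index_le_1:
  assumes "unitary_mat n U" "i < n" "j < n"
  shows "cmod (U $$ (i, j)) \<le> 1"
proof -
  have "complex_of_real (\<Sum>k<n. (cmod (U $$ (k, j)))\<^sup>2) = (\<Sum>k<n. cnj (U $$ (k, j)) * U $$ (k, j))"
    by (simp add: complex_norm_square mult.commute flip: of_real_power)
  then have "(\<Sum>k<n. (cmod (U $$ (k, j)))\<^sup>2) = 1"
    using unitary_mat_cols[OF assms(1) assms(3) assms(3)] of_real_eq_1_iff by fastforce
  moreover have "(cmod (U $$ (i, j)))\<^sup>2 \<le> (\<Sum>k<n. (cmod (U $$ (k, j)))\<^sup>2)"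
    using assms(2) by (intro member_le_sum) auto
  ultimately show ?thesis by (simp add: power_le_one_iff abs_le_square_iff)
qed

lemma conj_unitary_mult_right:
  assumes "unitary_mat n U" "D \<in> carrier_mat n n" "A = U * D * mat_adjoint U"
  shows "A * U = U * D"
proof -
  from assms(1,2) have [simp]: "dim_row U = n" "dim_col U = n" "dim_row D = n" "dim_col D = n"
    using unitary_mat_carrier by auto
  have "A * U = U * D * (mat_adjoint U * U)"
    using assms(3) by (simp add: assoc_mult_mat_dims)
  then show ?thesis using assms unfolding unitary_mat_def by simp
qed

lemma conj_unitary_mult_left:
  assumes "unitary_mat n U" "D \<in> carrier_mat n n" "A = U * D * mat_adjoint U"
  shows "mat_adjoint U * A = D * mat_adjoint U"
proof -
  from assms(1,2) have [simp]: "dim_row U = n" "dim_col U = n" "dim_row D = n" "dim_col D = n"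
    using unitary_mat_carrier by auto
  have "mat_adjoint U * A = (mat_adjoint U * U) * D * mat_adjoint U"
    using assms(3) by (simp add: assoc_mult_mat_dims)
  then show ?thesis using assms unfolding unitary_mat_def by simp
qed

lemma hermitian_mat_index:
  "hermitian_mat n A \<Longrightarrow> i < n \<Longrightarrow> j < n \<Longrightarrow> A $$ (i, j) = cnj (A $$ (j, i))"
  unfolding hermitian_mat_def by (metis mat_adjoint_index carrier_matD)

lemma hermitian_mat_Lambda_add:
  assumes "hermitian_mat n E"
  shows "hermitian_mat n (Lambda n \<alpha> + E)"
proof -
  have E: "E \<in> carrier_mat n n" "mat_adjoint E = E" using assms unfolding hermitian_mat_def by auto
  have "mat_adjoint (Lambda n \<alpha> + E) = Lambda n \<alpha> + E"
    using E by (intro eq_matI) (auto simp: Lambda_index intro: hermitian_mat_index[OF assms, symmetric])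
  then show ?thesis using E unfolding hermitian_mat_def by simp
qed

lemma cscalar_mult_mat_vec_adjoint:
  assumes A: "(A :: complex mat) \<in> carrier_mat n n" and v: "v \<in> carrier_vec n" and w: "w \<in> carrier_vec n"
  shows "conjugate v \<bullet> (A *\<^sub>v w) = conjugate (mat_adjoint A *\<^sub>v v) \<bullet> w"
proof -
  have "conjugate v \<bullet> (A *\<^sub>v w) = (\<Sum>i<n. \<Sum>j<n. cnj (v $ i) * A $$ (i, j) * w $ j)"
    using A v w by (simp add: scalar_prod_def atLeast0LessThan sum_distrib_left mult.assoc)
  also have "\<dots> = (\<Sum>j<n. \<Sum>i<n. cnj (v $ i) * A $$ (i, j) * w $ j)" by (rule sum.swap)
  also have "\<dots> = conjugate (mat_adjoint A *\<^sub>v v) \<bullet> w"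
    using A v w by (simp add: scalar_prod_def atLeast0LessThan sum_distrib_left sum_distrib_right cnj_sum
        mult.commute mult.left_commute)
  finally show ?thesis .
qed

lemma mult_mat_eq_zero_if_mult_vec:
  assumes A: "(A :: complex mat) \<in> carrier_mat n n" and B: "B \<in> carrier_mat n n"
    and AB: "\<forall>v\<in>carrier_vec n. A *\<^sub>v (B *\<^sub>v v) = 0\<^sub>v n"
  shows "A * B = 0\<^sub>m n n"
proof (rule eq_matI)
  fix i j assume "i < dim_row (0\<^sub>m n n :: complex mat)" "j < dim_col (0\<^sub>m n n :: complex mat)"
  then have i: "i < n" and j: "j < n" by auto
  have unit: "(C *\<^sub>v unit_vec n j) $ i = C $$ (i, j)" if "C \<in> carrier_mat n n" for C :: "complex mat"
    using that i j by simp
  have "(A * B) $$ (i, j) = ((A * B) *\<^sub>v unit_vec n j) $ i"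
    by (rule unit[OF mult_carrier_mat[OF A B], symmetric])
  also have "(A * B) *\<^sub>v unit_vec n j = A *\<^sub>v (B *\<^sub>v unit_vec n j)"
    by (rule assoc_mult_mat_vec[OF A B unit_vec_carrier])
  also have "\<dots> = 0\<^sub>v n" using AB by simp
  finally show "(A * B) $$ (i, j) = 0\<^sub>m n n $$ (i, j)" using i j by simp
qed (use A B in auto)

subsection \<open>The spectral theorem for Hermitian matrices\<close>

definition diag_cons :: "complex \<Rightarrow> complex mat \<Rightarrow> complex mat" where
  "diag_cons a A = Matrix.mat (Suc (dim_row A)) (Suc (dim_col A))
     (\<lambda>(i, j). if i = 0 \<and> j = 0 then a else if i = 0 \<or> j = 0 then 0 else A $$ (i - 1, j - 1))"

lemma diag_cons_carrier [simp]: "A \<in> carrier_mat m m \<Longrightarrow> diag_cons a A \<in> carrier_mat (Suc m) (Suc m)"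
  unfolding diag_cons_def by auto

lemma diag_cons_dim [simp]:
  "dim_row (diag_cons a A) = Suc (dim_row A)" "dim_col (diag_cons a A) = Suc (dim_col A)"
  unfolding diag_cons_def by auto

lemma diag_cons_index [simp]:
  "diag_cons a A $$ (0, 0) = a"
  "j < dim_col A \<Longrightarrow> diag_cons a A $$ (0, Suc j) = 0"
  "i < dim_row A \<Longrightarrow> diag_cons a A $$ (Suc i, 0) = 0"
  "i < dim_row A \<Longrightarrow> j < dim_col A \<Longrightarrow> diag_cons a A $$ (Suc i, Suc j) = A $$ (i, j)"
  unfolding diag_cons_def by auto

lemma diag_cons_eqI:
  assumes "A \<in> carrier_mat m m" "B \<in> carrier_mat (Suc m) (Suc m)"
    and "B $$ (0, 0) = a" "\<And>i. i < m \<Longrightarrow> B $$ (Suc i, 0) = 0" "\<And>j. j < m \<Longrightarrow> B $$ (0, Suc j) = 0"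
    and "\<And>i j. i < m \<Longrightarrow> j < m \<Longrightarrow> B $$ (Suc i, Suc j) = A $$ (i, j)"
  shows "B = diag_cons a A"
proof (rule eq_matI)
  from assms(1) have [simp]: "dim_row A = m" "dim_col A = m" by auto
  fix i j assume "i < dim_row (diag_cons a A)" "j < dim_col (diag_cons a A)"
  then show "B $$ (i, j) = diag_cons a A $$ (i, j)"
    using assms by (cases i; cases j) auto
qed (use assms in auto)

lemma diag_cons_mult:
  assumes "A \<in> carrier_mat m m" "B \<in> carrier_mat m m"
  shows "diag_cons a A * diag_cons b B = diag_cons (a * b) (A * B)"
proof (rule diag_cons_eqI[of _ m])
  have split_first: "(diag_cons a A * diag_cons b B) $$ (i, j) = diag_cons a A $$ (i, 0) * diag_cons b B $$ (0, j)
      + (\<Sum>k<m. diag_cons a A $$ (i, Suc k) * diag_cons b B $$ (Suc k, j))"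
    if "i < Suc m" "j < Suc m" for i j
  proof -
    have "(diag_cons a A * diag_cons b B) $$ (i, j) = (\<Sum>k<Suc m. diag_cons a A $$ (i, k) * diag_cons b B $$ (k, j))"
      using that assms by (intro index_mult_mat_sum) auto
    then show ?thesis by (simp only: sum.lessThan_Suc_shift)
  qed
  show "(diag_cons a A * diag_cons b B) $$ (0, 0) = a * b"
    using assms by (simp add: split_first del: index_mult_mat)
  show "(diag_cons a A * diag_cons b B) $$ (Suc i, 0) = 0" if "i < m" for i
    using that assms by (simp add: split_first del: index_mult_mat)
  show "(diag_cons a A * diag_cons b B) $$ (0, Suc j) = 0" if "j < m" for j
    using that assms by (simp add: split_first del: index_mult_mat)
  show "(diag_cons a A * diag_cons b B) $$ (Suc i, Suc j) = (A * B) $$ (i, j)" if "i < m" "j < m" for i j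
    using that assms by (simp add: split_first index_mult_mat_sum[of _ m m _ m] del: index_mult_mat)
qed (use assms in auto)

lemma mat_adjoint_diag_cons:
  "A \<in> carrier_mat m m \<Longrightarrow> mat_adjoint (diag_cons a A) = diag_cons (cnj a) (mat_adjoint A)"
  by (rule diag_cons_eqI[of _ m]) auto

lemma unitary_mat_diag_cons: "unitary_mat m U \<Longrightarrow> unitary_mat (Suc m) (diag_cons 1 U)"
proof (rule unitary_matI)
  assume U: "unitary_mat m U"
  then have Uc: "U \<in> carrier_mat m m" by (rule unitary_mat_carrier)
  then show "diag_cons 1 U \<in> carrier_mat (Suc m) (Suc m)" by simp
  have "diag_cons 1 U * mat_adjoint (diag_cons 1 U) = diag_cons 1 (1\<^sub>m m)"
    using U Uc unfolding unitary_mat_def by (simp add: mat_adjoint_diag_cons diag_cons_mult)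
  also have "\<dots> = 1\<^sub>m (Suc m)"
    by (rule diag_cons_eqI[of _ m, THEN sym]) auto
  finally show "diag_cons 1 U * mat_adjoint (diag_cons 1 U) = 1\<^sub>m (Suc m)" .
qed

lemma diag_cons_Lambda:
  "diag_cons (complex_of_real r) (Lambda m d) = Lambda (Suc m) (case_nat r d)"
  by (rule diag_cons_eqI[of _ m, THEN sym]) (auto simp: Lambda_index)

definition vec_norm :: "complex vec \<Rightarrow> real" where
  "vec_norm v = sqrt (\<Sum>i<dim_vec v. (cmod (v $ i))\<^sup>2)"

lemma cscalar_prod_self: "(w :: complex vec) \<bullet>c w = complex_of_real ((vec_norm w)\<^sup>2)"
proof -
  have "w \<bullet>c w = (\<Sum>i<dim_vec w. complex_of_real ((cmod (w $ i))\<^sup>2))"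
    by (simp add: scalar_prod_def atLeast0LessThan complex_norm_square flip: of_real_power)
  then show ?thesis
    unfolding vec_norm_def by (simp add: sum_nonneg)
qed

lemma unitary_mat_of_corthogonal:
  assumes len: "length ws = m" and ws: "set ws \<subseteq> carrier_vec m" and orth: "corthogonal ws"
  shows "unitary_mat m (Matrix.mat m m (\<lambda>(i, j). (ws ! j) $ i / complex_of_real (vec_norm (ws ! j))))"
    (is "unitary_mat m ?W")
proof -
  have dim: "j < m \<Longrightarrow> dim_vec (ws ! j) = m" for j using ws len nth_mem by (metis carrier_vecD subsetD)
  have orth: "j < m \<Longrightarrow> k < m \<Longrightarrow> (ws ! j \<bullet>c ws ! k = 0) = (j \<noteq> k)" for j k
    using orth len by (auto simp: corthogonal_def)
  have nz: "j < m \<Longrightarrow> vec_norm (ws ! j) \<noteq> 0" for j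
    using orth[of j j] cscalar_prod_self[of "ws ! j"] by auto
  have W: "?W \<in> carrier_mat m m" by simp
  have "mat_adjoint ?W * ?W = 1\<^sub>m m"
  proof (rule eq_matI)
    fix j k assume "j < dim_row (1\<^sub>m m :: complex mat)" "k < dim_col (1\<^sub>m m :: complex mat)"
    then have j: "j < m" and k: "k < m" by auto
    have "(mat_adjoint ?W * ?W) $$ (j, k) = (\<Sum>i<m. (ws ! k) $ i * cnj ((ws ! j) $ i))
        / (complex_of_real (vec_norm (ws ! j)) * complex_of_real (vec_norm (ws ! k)))"
      using W j k unfolding sum_divide_distrib
      by (subst index_mult_mat_sum[of _ m m _ m]) (auto intro!: sum.cong)
    also have "(\<Sum>i<m. (ws ! k) $ i * cnj ((ws ! j) $ i)) = ws ! k \<bullet>c ws ! j"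
      using j k dim by (simp add: scalar_prod_def atLeast0LessThan)
    finally show "(mat_adjoint ?W * ?W) $$ (j, k) = 1\<^sub>m m $$ (j, k)"
      using j k orth[of k j] nz[OF j] by (cases "j = k") (auto simp: cscalar_prod_self power2_eq_square)
  qed (use W in auto)
  then show ?thesis
    using W mat_mult_left_right_inverse[OF mat_adjoint_carrier[OF W] W] unfolding unitary_mat_def by auto
qed

text \<open>Gram-Schmidt applied to a basis completion of \<open>v\<close> keeps \<open>v\<close> as its first vector.\<close>

lemma unitary_mat_first_col:
  fixes v :: "complex vec"
  assumes v: "v \<in> carrier_vec m" and v0: "v \<noteq> 0\<^sub>v m"
  shows "\<exists>W. unitary_mat m W \<and> (\<forall>i<m. W $$ (i, 0) = v $ i / complex_of_real (vec_norm v))"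
proof -
  interpret cof_vec_space m "TYPE(complex)" .
  note bc = basis_completion[OF v v0]
  have m0: "m > 0" using v v0 by (cases m) auto
  obtain vs where bv: "basis_completion v = v # vs" using bc(6,7) m0 by (cases "basis_completion v") auto
  define ws where "ws = gram_schmidt m (basis_completion v)"
  note gs = gram_schmidt_result[OF bc(2) bc(4) bc(5) ws_def]
  have len: "length ws = m" using gs bc by simp
  have "hd ws = v" unfolding ws_def bv using v by simp
  then have "ws ! 0 = v" using len m0 by (cases ws) auto
  then show ?thesis
    using unitary_mat_of_corthogonal[OF len gs(3,2)] m0 by fastforce
qed

lemma unitary_conj_diag:
  assumes "unitary_mat n U" "D \<in> carrier_mat n n" "A = U * D * mat_adjoint U"
  shows "mat_adjoint U * A * U = D"
proof -
  have U: "U \<in> carrier_mat n n" using assms(1) by (rule unitary_mat_carrier)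
  have "mat_adjoint U * A * U = D * mat_adjoint U * U"
    by (simp add: conj_unitary_mult_left[OF assms])
  also have "\<dots> = D * (mat_adjoint U * U)"
    using U assms(2) by (simp add: assoc_mult_mat[of _ n n _ n _ n])
  finally show ?thesis using assms(1,2) unfolding unitary_mat_def by simp
qed

lemma hermitian_mat_conj:
  assumes "hermitian_mat n A" "W \<in> carrier_mat n n"
  shows "hermitian_mat n (mat_adjoint W * A * W)"
proof -
  have A: "A \<in> carrier_mat n n" and "mat_adjoint A = A"
    using assms(1) unfolding hermitian_mat_def by auto
  then have "mat_adjoint (mat_adjoint W * A * W) = mat_adjoint W * A * W"
    using assms(2) by (simp add: mat_adjoint_mult[of _ n n _ n] assoc_mult_mat[of _ n n _ n _ n])
  moreover have "mat_adjoint W * A * W \<in> carrier_mat n n"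
    using A assms(2) by (meson mult_carrier_mat mat_adjoint_carrier)
  ultimately show ?thesis unfolding hermitian_mat_def by simp
qed

lemma unitary_conj_eigenvector_col:
  assumes W: "unitary_mat n W" and A: "A \<in> carrier_mat n n"
    and eig: "A *\<^sub>v col W 0 = e \<cdot>\<^sub>v col W 0" and i: "i < n"
  shows "(mat_adjoint W * A * W) $$ (i, 0) = (if i = 0 then e else 0)"
proof -
  have Wc: "W \<in> carrier_mat n n" using W unitary_mat_carrier by auto
  have AW: "(A * W) $$ (k, 0) = e * W $$ (k, 0)" if "k < n" for k
    using arg_cong[OF eig, of "\<lambda>v :: complex vec. v $ k"] that i A Wc by simp
  have "(mat_adjoint W * A * W) $$ (i, 0) = (\<Sum>k<n. cnj (W $$ (k, i)) * (A * W) $$ (k, 0))"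
    using A Wc i by (simp add: assoc_mult_mat[of _ n n _ n _ n] index_mult_mat_sum[of _ n n _ n]
        del: index_mult_mat)
  also have "\<dots> = e * (\<Sum>k<n. cnj (W $$ (k, i)) * W $$ (k, 0))"
    unfolding sum_distrib_left by (intro sum.cong refl) (simp add: AW)
  finally show ?thesis using unitary_mat_cols[OF W i, of 0] i by simp
qed

lemma hermitian_mat_eq_diag_cons:
  assumes Bh: "hermitian_mat (Suc m) B" and B0: "\<And>i. i < Suc m \<Longrightarrow> B $$ (i, 0) = (if i = 0 then e else 0)"
  shows "\<exists>A'. hermitian_mat m A' \<and> B = diag_cons (complex_of_real (Re e)) A'"
proof -
  define A' where "A' = Matrix.mat m m (\<lambda>(i, j). B $$ (Suc i, Suc j))"
  have Bc: "B \<in> carrier_mat (Suc m) (Suc m)" using Bh unfolding hermitian_mat_def by auto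
  have "e = complex_of_real (Re e)"
    using hermitian_mat_index[OF Bh, of 0 0] B0[of 0] by (metis Reals_cnj_iff of_real_Re zero_less_Suc)
  moreover have "B $$ (0, Suc j) = 0" if "j < m" for j
    using hermitian_mat_index[OF Bh, of 0 "Suc j"] B0[of "Suc j"] that by simp
  ultimately have "B = diag_cons (complex_of_real (Re e)) A'"
    using B0 Bc by (intro diag_cons_eqI[of _ m]) (auto simp: A'_def)
  moreover have "mat_adjoint A' $$ (i, j) = A' $$ (i, j)" if "i < m" "j < m" for i j
    using hermitian_mat_index[OF Bh, of "Suc i" "Suc j"] that by (simp add: A'_def)
  then have "hermitian_mat m A'" unfolding hermitian_mat_def A'_def by (auto intro!: eq_matI)
  ultimately show ?thesis by blast
qed

text \<open>Conjugating by a unitary matrix whose first column is an eigenvector splits off a \<open>1 \<times> 1\<close> block.\<close>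

lemma hermitian_mat_deflation:
  assumes A: "hermitian_mat (Suc m) A"
  shows "\<exists>W e A'. unitary_mat (Suc m) W \<and> hermitian_mat m A'
    \<and> A = W * diag_cons (complex_of_real e) A' * mat_adjoint W"
proof -
  have Ac: "A \<in> carrier_mat (Suc m) (Suc m)" using A unfolding hermitian_mat_def by auto
  obtain e where "eigenvalue A e"
    using spectrum_non_empty[OF Ac] unfolding spectrum_def by auto
  then obtain v where v: "v \<in> carrier_vec (Suc m)" "v \<noteq> 0\<^sub>v (Suc m)" "A *\<^sub>v v = e \<cdot>\<^sub>v v"
    using Ac unfolding eigenvalue_def eigenvector_def by auto
  obtain W where W: "unitary_mat (Suc m) W"
    and W0: "\<forall>i<Suc m. W $$ (i, 0) = v $ i / complex_of_real (vec_norm v)"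
    using unitary_mat_first_col[OF v(1,2)] by blast
  have Wc: "W \<in> carrier_mat (Suc m) (Suc m)" using W unitary_mat_carrier by auto
  have "col W 0 = (1 / complex_of_real (vec_norm v)) \<cdot>\<^sub>v v"
    using W0 Wc v(1) by (intro eq_vecI) auto
  then have eig: "A *\<^sub>v col W 0 = e \<cdot>\<^sub>v col W 0"
    using Ac v by (simp add: mult_mat_vec smult_smult_assoc mult.commute)
  obtain A' where "hermitian_mat m A'" and B: "mat_adjoint W * A * W = diag_cons (complex_of_real (Re e)) A'"
    using hermitian_mat_eq_diag_cons[OF hermitian_mat_conj[OF A Wc] unitary_conj_eigenvector_col[OF W Ac eig]]
    by blast
  moreover have "A = W * (mat_adjoint W * A * W) * mat_adjoint W"
  proof -
    from Wc Ac have [simp]: "dim_row W = Suc m" "dim_col W = Suc m" "dim_row A = Suc m" "dim_col A = Suc m"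
      by auto
    have "W * (mat_adjoint W * A * W) * mat_adjoint W = (W * mat_adjoint W) * A * (W * mat_adjoint W)"
      by (simp add: assoc_mult_mat_dims)
    then show ?thesis using W Ac unfolding unitary_mat_def by simp
  qed
  ultimately show ?thesis using W unfolding B by blast
qed

theorem hermitian_mat_spectral:
  assumes "hermitian_mat n A"
  shows "\<exists>U d. unitary_mat n U \<and> A = U * Lambda n d * mat_adjoint U"
  using assms
proof (induction n arbitrary: A)
  case 0
  have "unitary_mat 0 (1\<^sub>m 0)" "A = 1\<^sub>m 0 * Lambda 0 (\<lambda>_. 0) * mat_adjoint (1\<^sub>m 0)"
    using 0 unfolding unitary_mat_def hermitian_mat_def by (auto intro!: eq_matI)
  then show ?case by blast
next
  case (Suc m)
  obtain W e A' where W: "unitary_mat (Suc m) W" and "hermitian_mat m A'"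
    and A: "A = W * diag_cons (complex_of_real e) A' * mat_adjoint W"
    using hermitian_mat_deflation[OF Suc.prems] by blast
  then obtain U d where U: "unitary_mat m U" and A': "A' = U * Lambda m d * mat_adjoint U"
    using Suc.IH by blast
  have Wc: "W \<in> carrier_mat (Suc m) (Suc m)" and Uc: "U \<in> carrier_mat m m"
    using W U unitary_mat_carrier by auto
  have "diag_cons (complex_of_real e) A'
      = diag_cons 1 U * diag_cons (complex_of_real e) (Lambda m d) * mat_adjoint (diag_cons 1 U)"
    using Uc by (simp add: A' mat_adjoint_diag_cons diag_cons_mult[OF Uc Lambda_carrier]
        diag_cons_mult[OF mult_carrier_mat[OF Uc Lambda_carrier] mat_adjoint_carrier[OF Uc]])
  then have "A = (W * diag_cons 1 U) * Lambda (Suc m) (case_nat e d) * mat_adjoint (W * diag_cons 1 U)"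
    using Wc Uc by (simp add: A diag_cons_Lambda mat_adjoint_mult[OF Wc diag_cons_carrier[OF Uc]] assoc_mult_mat_dims carrier_matD)
  moreover have "unitary_mat (Suc m) (W * diag_cons 1 U)"
    using W U by (simp add: unitary_mat_mult unitary_mat_diag_cons)
  ultimately show ?case by blast
qed

lemma psd_mat_spectral:
  assumes "psd_mat n A"
  shows "\<exists>U d. unitary_mat n U \<and> (\<forall>i<n. 0 \<le> d i) \<and> A = U * Lambda n d * mat_adjoint U"
proof -
  obtain U d where U: "unitary_mat n U" and A: "A = U * Lambda n d * mat_adjoint U"
    using assms hermitian_mat_spectral unfolding psd_mat_def by blast
  have Uc: "U \<in> carrier_mat n n" using U by (rule unitary_mat_carrier)
  have Ac: "A \<in> carrier_mat n n" using psd_mat_def hermitian_mat_def assms by auto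
  have "0 \<le> d k" if k: "k < n" for k
  proof -
    have "conjugate (col U k) \<bullet> (A *\<^sub>v col U k) = (mat_adjoint U * A * U) $$ (k, k)"
      using Uc Ac k by (simp add: assoc_mult_mat[of _ n n _ n _ n] index_mult_mat_sum[of _ n n _ n]
          scalar_prod_def atLeast0LessThan del: index_mult_mat)
    also have "\<dots> = complex_of_real (d k)"
      using unitary_conj_diag[OF U Lambda_carrier A] k by (simp add: Lambda_index)
    finally show ?thesis
      using assms Uc k unfolding psd_mat_def by (metis Re_complex_of_real col_dim carrier_matD(1) carrier_vecI)
  qed
  then show ?thesis using U A by blast
qed

lemma psd_power_spectral:
  assumes "psd_mat n A"
  obtains U d where "unitary_mat n U" "\<forall>i<n. 0 \<le> d i" "A = U * Lambda n d * mat_adjoint U"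
    "psd_power n s A = U * Lambda n (\<lambda>i. d i powr s) * mat_adjoint U"
proof -
  have "\<exists>B U d. unitary_mat n U \<and> (\<forall>i<n. 0 \<le> d i) \<and> A = U * Lambda n d * mat_adjoint U
      \<and> B = U * Lambda n (\<lambda>i. d i powr s) * mat_adjoint U"
    using psd_mat_spectral[OF assms] by blast
  from someI_ex[OF this] show ?thesis
    using that unfolding psd_power_def by blast
qed

lemma psd_power_carrier:
  assumes "psd_mat n A"
  shows "psd_power n s A \<in> carrier_mat n n"
proof -
  obtain U d where U: "unitary_mat n U" and "psd_power n s A = U * Lambda n (\<lambda>i. d i powr s) * mat_adjoint U"
    using psd_power_spectral[OF assms, of s] by metis
  moreover have "U \<in> carrier_mat n n" using U by (rule unitary_mat_carrier)
  ultimately show ?thesis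
    by (metis Lambda_carrier mat_adjoint_carrier mult_carrier_mat)
qed

subsection \<open>Resolvent and Riesz projection of a Hermitian matrix\<close>

lemma mat_inv_eqI:
  assumes G: "G \<in> carrier_mat n n" and H: "H \<in> carrier_mat n n"
    and "G * H = 1\<^sub>m n" "H * G = 1\<^sub>m n"
  shows "mat_inv n G = H"
proof -
  have "\<exists>B. B \<in> carrier_mat n n \<and> G * B = 1\<^sub>m n \<and> B * G = 1\<^sub>m n" using H assms by blast
  then have B: "mat_inv n G \<in> carrier_mat n n" "mat_inv n G * G = 1\<^sub>m n"
    unfolding mat_inv_def by (metis (mono_tags, lifting) someI_ex)+
  have "mat_inv n G = mat_inv n G * (G * H)" using assms B by simp
  also have "\<dots> = (mat_inv n G * G) * H" by (rule assoc_mult_mat[OF B(1) G H, symmetric])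
  finally show ?thesis using B H by simp
qed

lemma eigenvalue_spectral:
  assumes V: "unitary_mat n V" and M: "M = V * Lambda n \<mu> * mat_adjoint V" and k: "k < n"
  shows "eigenvalue M (complex_of_real (\<mu> k))"
proof -
  have Vc: "V \<in> carrier_mat n n" using V by (rule unitary_mat_carrier)
  have Mc: "M \<in> carrier_mat n n" unfolding M using Vc by (intro mult_carrier_mat[of _ n n]) auto
  have "col V k \<noteq> 0\<^sub>v n"
  proof
    assume col0: "col V k = 0\<^sub>v n"
    have "V $$ (i, k) = 0" if "i < n" for i
    proof -
      have "V $$ (i, k) = col V k $ i" using Vc k that by simp
      then show ?thesis using col0 that by simp
    qed
    then show False using unitary_mat_cols[OF V k k] by simp
  qed
  moreover have "M *\<^sub>v col V k = complex_of_real (\<mu> k) \<cdot>\<^sub>v col V k"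
  proof -
    have "M *\<^sub>v col V k = col (M * V) k" by (rule col_mult2[OF Mc Vc k, symmetric])
    also have "M * V = V * Lambda n \<mu>" by (rule conj_unitary_mult_right[OF V Lambda_carrier M])
    also have "col (V * Lambda n \<mu>) k = complex_of_real (\<mu> k) \<cdot>\<^sub>v col V k"
    proof (rule eq_vecI)
      fix i assume "i < dim_vec (complex_of_real (\<mu> k) \<cdot>\<^sub>v col V k)"
      then have i: "i < n" using Vc by simp
      have "(V * Lambda n \<mu>) $$ (i, k) = V $$ (i, k) * complex_of_real (\<mu> k)"
        unfolding Lambda_def using Vc i k by (rule mult_mat_diag_index)
      then show "col (V * Lambda n \<mu>) k $ i = (complex_of_real (\<mu> k) \<cdot>\<^sub>v col V k) $ i"
        using Vc i k by (simp add: mult.commute)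
    qed (use Vc in simp)
    finally show ?thesis .
  qed
  moreover have "col V k \<in> carrier_vec (dim_row M)" using Mc Vc k by simp
  ultimately show ?thesis unfolding eigenvalue_def eigenvector_def using Mc by blast
qed

lemma resolvent_spectral:
  assumes V: "unitary_mat n V" and M: "M = V * Lambda n \<mu> * mat_adjoint V"
    and z: "\<forall>k<n. z \<noteq> complex_of_real (\<mu> k)"
  shows "mat_inv n (z \<cdot>\<^sub>m 1\<^sub>m n - M) = V * mat_diag n (\<lambda>k. 1 / (z - complex_of_real (\<mu> k))) * mat_adjoint V"
proof -
  have Vc: "V \<in> carrier_mat n n" using V by (rule unitary_mat_carrier)
  have VV: "mat_adjoint V * V = 1\<^sub>m n" using V unfolding unitary_mat_def by simp
  have Mc: "M \<in> carrier_mat n n" unfolding M using Vc by (intro mult_carrier_mat[of _ n n]) auto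
  have "z \<cdot>\<^sub>m 1\<^sub>m n - M = V * mat_diag n (\<lambda>k. z - complex_of_real (\<mu> k)) * mat_adjoint V"
  proof (rule eq_matI)
    fix i j assume "i < dim_row (V * mat_diag n (\<lambda>k. z - complex_of_real (\<mu> k)) * mat_adjoint V)"
      "j < dim_col (V * mat_diag n (\<lambda>k. z - complex_of_real (\<mu> k)) * mat_adjoint V)"
    then have i: "i < n" and j: "j < n" using Vc by auto
    have "(z \<cdot>\<^sub>m 1\<^sub>m n - M) $$ (i, j) = z * (if i = j then 1 else 0) - M $$ (i, j)"
      using Mc i j by simp
    also have "\<dots> = z * (\<Sum>k<n. V $$ (i, k) * cnj (V $$ (j, k)))
        - (\<Sum>k<n. V $$ (i, k) * complex_of_real (\<mu> k) * cnj (V $$ (j, k)))"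
      unfolding unitary_mat_rows[OF V i j] M Lambda_def conj_mat_diag_index[OF Vc i j] ..
    also have "\<dots> = (V * mat_diag n (\<lambda>k. z - complex_of_real (\<mu> k)) * mat_adjoint V) $$ (i, j)"
      unfolding conj_mat_diag_index[OF Vc i j]
      by (simp add: sum_distrib_left sum_subtractf[symmetric] algebra_simps)
    finally show "(z \<cdot>\<^sub>m 1\<^sub>m n - M) $$ (i, j) = (V * mat_diag n (\<lambda>k. z - complex_of_real (\<mu> k)) * mat_adjoint V) $$ (i, j)" .
  qed (use Mc Vc in auto)
  moreover have "mat_diag n (\<lambda>k. (z - complex_of_real (\<mu> k)) * (1 / (z - complex_of_real (\<mu> k)))) = 1\<^sub>m n"
    "mat_diag n (\<lambda>k. 1 / (z - complex_of_real (\<mu> k)) * (z - complex_of_real (\<mu> k))) = 1\<^sub>m n"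
    using z by (auto intro!: eq_matI simp: mat_diag_def)
  moreover have "V * 1\<^sub>m n * mat_adjoint V = 1\<^sub>m n"
    using V Vc unfolding unitary_mat_def by simp
  ultimately show ?thesis
    using Vc VV by (intro mat_inv_eqI) (auto simp: conj_mat_diag_mult)
qed

lemma winding_number_circlepath_indicator:
  assumes "0 < \<rho>" and "cmod (w - c) \<noteq> \<rho>"
  shows "winding_number (circlepath c \<rho>) w = complex_of_real (indicator (ball c \<rho>) w)"
proof (cases "cmod (w - c) < \<rho>")
  case True
  then show ?thesis using winding_number_circlepath[of w c \<rho>] by (simp add: dist_norm norm_minus_commute)
next
  case False
  then have "w \<notin> cball c \<rho>" using assms by (auto simp: dist_norm norm_minus_commute)
  then have "winding_number (circlepath c \<rho>) w = 0"
    using assms by (intro winding_number_zero_outside[OF _ convex_cball]) (auto simp: sphere_cball)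
  then show ?thesis using False by (simp add: dist_norm norm_minus_commute)
qed

lemma has_contour_integral_simple_poles:
  fixes w a :: "nat \<Rightarrow> complex"
  assumes \<rho>: "0 < \<rho>" and off: "\<forall>k<n. cmod (w k - c) \<noteq> \<rho>"
  shows "((\<lambda>z. \<Sum>k<n. a k * (1 / (z - w k))) has_contour_integral
    (\<Sum>k<n. a k * (2 * pi * \<i> * complex_of_real (indicator (ball c \<rho>) (w k))))) (circlepath c \<rho>)"
proof (intro has_contour_integral_sum has_contour_integral_lmul finite_lessThan)
  fix k assume "k \<in> {..<n}"
  then have "w k \<notin> path_image (circlepath c \<rho>)" "cmod (w k - c) \<noteq> \<rho>"
    using off \<rho> by (auto simp: dist_norm norm_minus_commute)
  then show "((\<lambda>z. 1 / (z - w k)) has_contour_integral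
      2 * pi * \<i> * complex_of_real (indicator (ball c \<rho>) (w k))) (circlepath c \<rho>)"
    using has_contour_integral_winding_number[OF valid_path_circlepath]
      winding_number_circlepath_indicator[OF \<rho>] by metis
qed

text \<open>For a Hermitian matrix the contour integral reduces, eigenvalue by eigenvalue, to a winding number.\<close>

theorem riesz_proj_spectral:
  assumes V: "unitary_mat n V" and M: "M = V * Lambda n \<mu> * mat_adjoint V"
    and sphere: "\<forall>z\<in>sphere c \<rho>. \<not> eigenvalue M z" and \<rho>: "0 < \<rho>"
  shows "riesz_proj n c \<rho> M = V * Lambda n (\<lambda>k. indicator (ball c \<rho>) (complex_of_real (\<mu> k))) * mat_adjoint V"
proof (rule eq_matI)
  have Vc: "V \<in> carrier_mat n n" using V by (rule unitary_mat_carrier)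
  fix i j
  assume "i < dim_row (V * Lambda n (\<lambda>k. indicator (ball c \<rho>) (complex_of_real (\<mu> k))) * mat_adjoint V)"
    "j < dim_col (V * Lambda n (\<lambda>k. indicator (ball c \<rho>) (complex_of_real (\<mu> k))) * mat_adjoint V)"
  then have i: "i < n" and j: "j < n" using Vc by auto
  have off: "complex_of_real (\<mu> k) \<notin> sphere c \<rho>" if "k < n" for k
    using sphere eigenvalue_spectral[OF V M that] by blast
  define a where "a k = V $$ (i, k) * cnj (V $$ (j, k))" for k
  have "((\<lambda>z. \<Sum>k<n. a k * (1 / (z - complex_of_real (\<mu> k)))) has_contour_integral
      (\<Sum>k<n. a k * (2 * pi * \<i> * complex_of_real (indicator (ball c \<rho>) (complex_of_real (\<mu> k)))))) (circlepath c \<rho>)"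
    by (rule has_contour_integral_simple_poles[OF \<rho>]) (use off in \<open>auto simp: dist_norm norm_minus_commute\<close>)
  moreover have "(\<Sum>k<n. a k * (1 / (z - complex_of_real (\<mu> k)))) = mat_inv n (z \<cdot>\<^sub>m 1\<^sub>m n - M) $$ (i, j)"
    if "z \<in> path_image (circlepath c \<rho>)" for z
  proof -
    have z: "\<forall>k<n. z \<noteq> complex_of_real (\<mu> k)" using off that \<rho> by auto
    show ?thesis
      unfolding resolvent_spectral[OF V M z] conj_mat_diag_index[OF Vc i j] a_def
      by (intro sum.cong refl) (simp add: algebra_simps)
  qed
  ultimately have "contour_integral (circlepath c \<rho>) (\<lambda>z. mat_inv n (z \<cdot>\<^sub>m 1\<^sub>m n - M) $$ (i, j))
      = (\<Sum>k<n. a k * (2 * pi * \<i> * complex_of_real (indicator (ball c \<rho>) (complex_of_real (\<mu> k)))))"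
    by (metis (no_types, lifting) has_contour_integral_eq contour_integral_unique)
  then have "riesz_proj n c \<rho> M $$ (i, j)
      = (\<Sum>k<n. V $$ (i, k) * complex_of_real (indicator (ball c \<rho>) (complex_of_real (\<mu> k))) * cnj (V $$ (j, k)))"
    using i j unfolding riesz_proj_def a_def
    by (simp add: sum_distrib_left field_simps)
  also have "\<dots> = (V * Lambda n (\<lambda>k. indicator (ball c \<rho>) (complex_of_real (\<mu> k))) * mat_adjoint V) $$ (i, j)"
    unfolding Lambda_def by (rule conj_mat_diag_index[OF Vc i j, symmetric])
  finally show "riesz_proj n c \<rho> M $$ (i, j)
      = (V * Lambda n (\<lambda>k. indicator (ball c \<rho>) (complex_of_real (\<mu> k))) * mat_adjoint V) $$ (i, j)" .
qed (use unitary_mat_carrier[OF V] in \<open>auto simp: riesz_proj_def\<close>)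

lemma mat_diag_mult_cancel:
  assumes A: "(A :: complex mat) \<in> carrier_mat n m" and B: "B \<in> carrier_mat n m"
    and eq: "mat_diag n g * A = mat_diag n g * B" and fg: "\<forall>k<n. g k = 0 \<longrightarrow> f k = 0"
  shows "mat_diag n f * A = mat_diag n f * B"
proof (rule eq_matI)
  fix i j assume "i < dim_row (mat_diag n f * B)" "j < dim_col (mat_diag n f * B)"
  then have i: "i < n" and j: "j < m" using B by auto
  have "g i * A $$ (i, j) = g i * B $$ (i, j)"
    using arg_cong[OF eq, of "\<lambda>C. C $$ (i, j)"] A B i j by (simp add: mat_diag_mult_index del: index_mult_mat)
  then show "(mat_diag n f * A) $$ (i, j) = (mat_diag n f * B) $$ (i, j)"
    using A B fg i j by (cases "g i = 0") (auto simp: mat_diag_mult_index simp del: index_mult_mat)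
qed (use A B in auto)

lemma mult_mat_diag_cancel:
  assumes A: "(A :: complex mat) \<in> carrier_mat m n" and B: "B \<in> carrier_mat m n"
    and eq: "A * mat_diag n g = B * mat_diag n g" and fg: "\<forall>k<n. g k = 0 \<longrightarrow> f k = 0"
  shows "A * mat_diag n f = B * mat_diag n f"
proof (rule eq_matI)
  fix i j assume "i < dim_row (B * mat_diag n f)" "j < dim_col (B * mat_diag n f)"
  then have i: "i < m" and j: "j < n" using B by auto
  have "A $$ (i, j) * g j = B $$ (i, j) * g j"
    using arg_cong[OF eq, of "\<lambda>C. C $$ (i, j)"] A B i j by (simp add: mult_mat_diag_index del: index_mult_mat)
  then show "(A * mat_diag n f) $$ (i, j) = (B * mat_diag n f) $$ (i, j)"
    using A B fg i j by (cases "g j = 0") (auto simp: mult_mat_diag_index simp del: index_mult_mat)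
qed (use A B in auto)

text \<open>\<open>X G = X\<close> says that the rows of \<open>U\<^sup>* G\<close> and \<open>U\<^sup>*\<close> agree wherever \<open>x\<^sub>k \<noteq> 0\<close>,
  and \<open>f (x\<^sub>k) \<noteq> 0\<close> only there.\<close>

lemma spectral_fun_mult_right:
  assumes U: "unitary_mat n U" and X: "X = U * Lambda n x * mat_adjoint U"
    and G: "G \<in> carrier_mat n n" and XG: "X * G = X" and f0: "f 0 = 0"
  shows "U * Lambda n (\<lambda>i. f (x i)) * mat_adjoint U * G = U * Lambda n (\<lambda>i. f (x i)) * mat_adjoint U"
proof -
  have Uc: "U \<in> carrier_mat n n" using U by (rule unitary_mat_carrier)
  have U': "mat_adjoint U \<in> carrier_mat n n" using Uc by simp
  have Xc: "X \<in> carrier_mat n n" unfolding X using Uc by (intro mult_carrier_mat[of _ n n]) auto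
  have "Lambda n x * (mat_adjoint U * G) = (Lambda n x * mat_adjoint U) * G"
    by (rule assoc_mult_mat[OF Lambda_carrier U' G, symmetric])
  also have "\<dots> = (mat_adjoint U * X) * G"
    by (simp only: conj_unitary_mult_left[OF U Lambda_carrier X])
  also have "\<dots> = mat_adjoint U * (X * G)" by (rule assoc_mult_mat[OF U' Xc G])
  also have "\<dots> = Lambda n x * mat_adjoint U"
    by (simp only: XG conj_unitary_mult_left[OF U Lambda_carrier X])
  finally have eq: "Lambda n x * (mat_adjoint U * G) = Lambda n x * mat_adjoint U" .
  have "Lambda n (\<lambda>i. f (x i)) * (mat_adjoint U * G) = Lambda n (\<lambda>i. f (x i)) * mat_adjoint U"
    unfolding Lambda_def
    by (rule mat_diag_mult_cancel[OF mult_carrier_mat[OF U' G] U' eq[unfolded Lambda_def]]) (use f0 in simp)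
  then show ?thesis
    using assoc_mult_mat[OF mult_carrier_mat[OF Uc Lambda_carrier] U' G]
      assoc_mult_mat[OF Uc Lambda_carrier mult_carrier_mat[OF U' G]]
      assoc_mult_mat[OF Uc Lambda_carrier U'] by metis
qed

lemma spectral_fun_mult_left:
  assumes U: "unitary_mat n U" and X: "X = U * Lambda n x * mat_adjoint U"
    and G: "G \<in> carrier_mat n n" and GX: "G * X = X" and f0: "f 0 = 0"
  shows "G * (U * Lambda n (\<lambda>i. f (x i)) * mat_adjoint U) = U * Lambda n (\<lambda>i. f (x i)) * mat_adjoint U"
proof -
  have Uc: "U \<in> carrier_mat n n" using U by (rule unitary_mat_carrier)
  have Xc: "X \<in> carrier_mat n n" unfolding X using Uc by (intro mult_carrier_mat[of _ n n]) auto
  have "(G * U) * Lambda n x = G * (U * Lambda n x)"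
    by (rule assoc_mult_mat[OF G Uc Lambda_carrier])
  also have "\<dots> = G * (X * U)"
    by (simp only: conj_unitary_mult_right[OF U Lambda_carrier X])
  also have "\<dots> = (G * X) * U" by (rule assoc_mult_mat[OF G Xc Uc, symmetric])
  also have "\<dots> = U * Lambda n x"
    by (simp only: GX conj_unitary_mult_right[OF U Lambda_carrier X])
  finally have eq: "(G * U) * Lambda n x = U * Lambda n x" .
  have "(G * U) * Lambda n (\<lambda>i. f (x i)) = U * Lambda n (\<lambda>i. f (x i))"
    unfolding Lambda_def
    by (rule mult_mat_diag_cancel[OF mult_carrier_mat[OF G Uc] Uc eq[unfolded Lambda_def]]) (use f0 in simp)
  then show ?thesis
    using assoc_mult_mat[OF G mult_carrier_mat[OF Uc Lambda_carrier] mat_adjoint_carrier[OF Uc]]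
      assoc_mult_mat[OF G Uc Lambda_carrier] by metis
qed

lemma norm_bound_index:
  "norm_bound A K \<Longrightarrow> i < dim_row A \<Longrightarrow> j < dim_col A \<Longrightarrow> norm (A $$ (i, j)) \<le> K"
  unfolding norm_bound_def by blast

lemma norm_bound_mult_square:
  assumes "A \<in> carrier_mat n n" "B \<in> carrier_mat n n" "norm_bound A a" "norm_bound B b"
  shows "norm_bound (A * B) (real n * a * b)"
  using norm_bound_mult[OF assms] by (simp add: mult.commute mult.left_commute)

lemma norm_bound_mat_adjoint: "norm_bound (A :: complex mat) K \<Longrightarrow> norm_bound (mat_adjoint A) K"
  unfolding norm_bound_def by simp

lemma norm_bound_unitary: "unitary_mat n U \<Longrightarrow> norm_bound U 1"
  using unitary_mat_carrier unitary_mat_index_le_1 unfolding norm_bound_def by fastforce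

lemma norm_bound_mnorm: "A \<in> carrier_mat n n \<Longrightarrow> norm_bound A (mnorm n A)"
proof (rule norm_boundI)
  fix i j assume A: "A \<in> carrier_mat n n" and "i < dim_row A" "j < dim_col A"
  then have i: "i < n" and j: "j < n" by auto
  have "(cmod (A $$ (i, j)))\<^sup>2 \<le> (\<Sum>j'<n. (cmod (A $$ (i, j')))\<^sup>2)"
    using j by (intro member_le_sum) auto
  also have "\<dots> \<le> (\<Sum>i'<n. \<Sum>j'<n. (cmod (A $$ (i', j')))\<^sup>2)"
    using i by (intro member_le_sum) (auto intro: sum_nonneg)
  finally show "norm (A $$ (i, j)) \<le> mnorm n A" unfolding mnorm_def by (simp add: real_le_rsqrt)
qed

lemma mnorm_le_norm_bound:
  assumes A: "A \<in> carrier_mat n n" and K: "norm_bound A K" and "0 \<le> K"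
  shows "mnorm n A \<le> real n * K"
proof -
  have "(\<Sum>i<n. \<Sum>j<n. (cmod (A $$ (i, j)))\<^sup>2) \<le> (\<Sum>i<n. \<Sum>j<n. K\<^sup>2)"
    using A norm_bound_index[OF K] by (intro sum_mono power_mono) auto
  also have "\<dots> = (real n * K)\<^sup>2" by (simp add: power2_eq_square)
  finally show ?thesis unfolding mnorm_def using \<open>0 \<le> K\<close> by (intro real_le_lsqrt) auto
qed

lemma norm_bound_mono: "norm_bound A a \<Longrightarrow> a \<le> b \<Longrightarrow> norm_bound A b"
  unfolding norm_bound_def by force

lemma norm_bound_telescope:
  assumes "B \<in> carrier_mat n n" "C \<in> carrier_mat n n" "D \<in> carrier_mat n n"
    and "norm_bound (A - B) a" "norm_bound (B - C) b" "norm_bound (C - D) c"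
  shows "norm_bound (A - D) (a + b + c)"
proof (rule norm_boundI)
  fix i j assume "i < dim_row (A - D)" "j < dim_col (A - D)"
  then have i: "i < n" and j: "j < n" using assms(3) by auto
  from assms(1-3) have [simp]: "dim_row B = n" "dim_col B = n" "dim_row C = n" "dim_col C = n"
    "dim_row D = n" "dim_col D = n" by auto
  have "norm ((A - D) $$ (i, j)) = norm ((A - B) $$ (i, j) + (B - C) $$ (i, j) + (C - D) $$ (i, j))"
    using i j by simp
  also have "\<dots> \<le> norm ((A - B) $$ (i, j)) + norm ((B - C) $$ (i, j)) + norm ((C - D) $$ (i, j))"
    by (rule order_trans[OF norm_triangle_ineq add_right_mono[OF norm_triangle_ineq]])
  also have "\<dots> \<le> a + b + c"
    using norm_bound_index[OF assms(4)] norm_bound_index[OF assms(5)] norm_bound_index[OF assms(6)] i j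
    by (simp add: add_mono)
  finally show "norm ((A - D) $$ (i, j)) \<le> a + b + c" .
qed

lemma norm_bound_conj_Lambda:
  assumes U: "unitary_mat n U" and d: "\<forall>k<n. \<bar>d k\<bar> \<le> K"
  shows "norm_bound (U * Lambda n d * mat_adjoint U) (real n * K)"
proof (rule norm_boundI)
  have Uc: "U \<in> carrier_mat n n" using U by (rule unitary_mat_carrier)
  fix i j assume "i < dim_row (U * Lambda n d * mat_adjoint U)" "j < dim_col (U * Lambda n d * mat_adjoint U)"
  then have i: "i < n" and j: "j < n" using Uc by auto
  have "norm ((U * Lambda n d * mat_adjoint U) $$ (i, j))
      \<le> (\<Sum>k<n. cmod (U $$ (i, k)) * \<bar>d k\<bar> * cmod (U $$ (j, k)))"
    unfolding Lambda_def conj_mat_diag_index[OF Uc i j]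
    by (rule order_trans[OF norm_sum]) (simp add: norm_mult)
  also have "\<dots> \<le> (\<Sum>k<n. 1 * K * 1)"
    using unitary_mat_index_le_1[OF U] i j d
    by (intro sum_mono mult_mono) (auto intro: order_trans[OF abs_ge_zero])
  finally show "norm ((U * Lambda n d * mat_adjoint U) $$ (i, j)) \<le> real n * K" by simp
qed

lemma spectral_abs_le_norm_bound:
  assumes U: "unitary_mat n U" and X: "X = U * Lambda n x * mat_adjoint U"
    and K: "norm_bound X K" and k: "k < n"
  shows "\<bar>x k\<bar> \<le> real n ^ 2 * K"
proof -
  have Uc: "U \<in> carrier_mat n n" using U by (rule unitary_mat_carrier)
  have Xc: "X \<in> carrier_mat n n" unfolding X using Uc by (intro mult_carrier_mat[of _ n n]) auto
  have "norm_bound (mat_adjoint U * X * U) (real n * (real n * 1 * K) * 1)"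
    using Uc Xc by (intro norm_bound_mult_square norm_bound_mat_adjoint norm_bound_unitary[OF U] K)
      (auto intro: mult_carrier_mat)
  from norm_bound_index[OF this, of k k] show ?thesis
    using unitary_conj_diag[OF U Lambda_carrier X] k Uc by (simp add: Lambda_index power2_eq_square)
qed

lemma powr_norm_bound:
  assumes U: "unitary_mat n U" and X: "X = U * Lambda n x * mat_adjoint U" and x: "\<forall>i<n. 0 \<le> x i"
    and K: "norm_bound X K" and s: "0 \<le> s"
  shows "norm_bound (U * Lambda n (\<lambda>i. x i powr s) * mat_adjoint U) (real n * (real n ^ 2 * K) powr s)"
proof (rule norm_bound_conj_Lambda[OF U], intro allI impI)
  fix k assume k: "k < n"
  have "x k \<le> real n ^ 2 * K" using spectral_abs_le_norm_bound[OF U X K k] by simp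
  then show "\<bar>x k powr s\<bar> \<le> (real n ^ 2 * K) powr s" using x k s by (simp add: powr_mono2)
qed

subsection \<open>Holder continuity of real powers\<close>

lemma powr_add_le_add_powr:
  fixes a b s :: real
  assumes a: "0 \<le> a" and b: "0 \<le> b" and s: "0 \<le> s" "s \<le> 1"
  shows "(a + b) powr s \<le> a powr s + b powr s"
proof (cases "a + b = 0")
  case True then show ?thesis using a b by simp
next
  case False
  then have ab: "0 < a + b" using a b by simp
  define t where "t = a / (a + b)"
  have t: "0 \<le> t" "t \<le> 1" using a b ab by (auto simp: t_def field_simps)
  have "t + (1 - t) \<le> t powr s + (1 - t) powr s"
    using powr_mono'[OF s(2), of t] powr_mono'[OF s(2), of "1 - t"] t by simp
  then have "(a + b) powr s \<le> (t powr s + (1 - t) powr s) * (a + b) powr s"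
    by (simp add: mult_le_cancel_right1)
  also have "\<dots> = (t * (a + b)) powr s + ((1 - t) * (a + b)) powr s"
    using t ab by (simp add: powr_mult distrib_right)
  finally have "(a + b) powr s \<le> (t * (a + b)) powr s + ((1 - t) * (a + b)) powr s" .
  moreover have "t * (a + b) = a" "(1 - t) * (a + b) = b"
    using ab by (auto simp: t_def field_simps)
  ultimately show ?thesis by simp
qed

lemma abs_powr_diff_le:
  fixes x y s :: real
  assumes x: "0 \<le> x" and y: "0 \<le> y" and s: "0 \<le> s" "s \<le> 1"
  shows "\<bar>x powr s - y powr s\<bar> \<le> \<bar>x - y\<bar> powr s"
proof -
  have *: "\<bar>u powr s - v powr s\<bar> \<le> \<bar>u - v\<bar> powr s" if "0 \<le> v" "v \<le> u" for u v :: real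
    using powr_add_le_add_powr[of "u - v" v s] powr_mono2[OF s(1) that] that s by simp
  show ?thesis
    using *[OF y] *[OF x, of y] by (cases "y \<le> x") (auto simp: abs_minus_commute)
qed

lemma abs_powr_diff_mult_le:
  fixes x y a D s :: real
  assumes x: "0 \<le> x" and y: "0 \<le> y" and s: "0 < s" "s \<le> 1"
    and a: "0 \<le> a" and D: "\<bar>x - y\<bar> * a \<le> D"
  shows "\<bar>x powr s - y powr s\<bar> * a \<le> D powr s * (1 + a)"
proof (cases "a = 0")
  case True then show ?thesis by simp
next
  case False
  then have a0: "0 < a" using a by simp
  have "\<bar>x powr s - y powr s\<bar> * a \<le> \<bar>x - y\<bar> powr s * a"
    using abs_powr_diff_le[OF x y _ s(2)] s a by (intro mult_right_mono) auto
  also have "\<dots> = (\<bar>x - y\<bar> * a) powr s * a powr (1 - s)"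
    using a0 by (simp add: powr_mult powr_diff powr_add[symmetric])
  also have "\<dots> \<le> D powr s * (1 + a)"
  proof (intro mult_mono powr_mono2)
    show "a powr (1 - s) \<le> 1 + a"
      using powr_le1[of "1 - s" a] powr_mono[of "1 - s" 1 a] s a by (cases "a \<le> 1") auto
  qed (use D s a in auto)
  finally show ?thesis .
qed

lemma powr_terms_le_powr_min:
  fixes b s A1 A2 A3 K1 K2 K3 :: real
  assumes b: "0 < b" "b \<le> 1" and s: "0 < s"
    and A: "0 \<le> A1" "0 \<le> A2" "0 \<le> A3" and K: "0 \<le> K1" "0 \<le> K2" "0 \<le> K3"
  shows "A1 * b * (K1 * b) powr s + A2 * (K2 * b ^ 3) powr s + A3 * b * (K3 * b) powr s
    \<le> (A1 * K1 powr s + A2 * K2 powr s + A3 * K3 powr s) * b powr min (1 + s) (3 * s)"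
proof -
  have "b * b powr s = b powr (1 + s)" using b by (simp add: powr_add)
  also have "\<dots> \<le> b powr min (1 + s) (3 * s)" using b by (intro powr_mono') auto
  finally have b1: "b * b powr s \<le> b powr min (1 + s) (3 * s)" .
  have "b ^ 3 = b powr 3" using b by (simp add: powr_numeral)
  then have "(b ^ 3) powr s = b powr (3 * s)" by (simp add: powr_powr)
  also have "\<dots> \<le> b powr min (1 + s) (3 * s)" using b by (intro powr_mono') auto
  finally have b3: "(b ^ 3) powr s \<le> b powr min (1 + s) (3 * s)" .
  have "A1 * b * (K1 * b) powr s = (A1 * K1 powr s) * (b * b powr s)"
    "A2 * (K2 * b ^ 3) powr s = (A2 * K2 powr s) * (b ^ 3) powr s"
    "A3 * b * (K3 * b) powr s = (A3 * K3 powr s) * (b * b powr s)"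
    using b K by (simp_all add: powr_mult)
  moreover have "(A1 * K1 powr s) * (b * b powr s) \<le> (A1 * K1 powr s) * b powr min (1 + s) (3 * s)"
    "(A2 * K2 powr s) * (b ^ 3) powr s \<le> (A2 * K2 powr s) * b powr min (1 + s) (3 * s)"
    "(A3 * K3 powr s) * (b * b powr s) \<le> (A3 * K3 powr s) * b powr min (1 + s) (3 * s)"
    using A by (intro mult_left_mono b1 b3; simp)+
  ultimately show ?thesis unfolding distrib_right by linarith
qed

subsection \<open>Commutators with real powers\<close>

lemma Lambda_commutator_index:
  assumes "A \<in> carrier_mat n n" "k < n" "m < n"
  shows "(Lambda n a * A - A * Lambda n b) $$ (k, m) = complex_of_real (a k - b m) * A $$ (k, m)"
proof -
  from assms(1) have [simp]: "dim_row A = n" "dim_col A = n" by auto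
  have "(Lambda n a * A - A * Lambda n b) $$ (k, m) = (Lambda n a * A) $$ (k, m) - (A * Lambda n b) $$ (k, m)"
    using assms(2,3) by (intro index_minus_mat(1)) simp_all
  also have "(Lambda n a * A) $$ (k, m) = complex_of_real (a k) * A $$ (k, m)"
    unfolding Lambda_def by (rule mat_diag_mult_index[OF assms])
  also have "(A * Lambda n b) $$ (k, m) = A $$ (k, m) * complex_of_real (b m)"
    unfolding Lambda_def by (rule mult_mat_diag_index[OF assms])
  finally show ?thesis by (simp add: algebra_simps)
qed

lemma unitary_conj_commutator:
  assumes U: "unitary_mat n U" and W: "unitary_mat n W"
    and D1: "D1 \<in> carrier_mat n n" and D2: "D2 \<in> carrier_mat n n" and T: "T \<in> carrier_mat n n"
  shows "U * (D1 * (mat_adjoint U * T * W) - (mat_adjoint U * T * W) * D2) * mat_adjoint W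
    = U * D1 * mat_adjoint U * T - T * (W * D2 * mat_adjoint W)"
proof -
  have Uc: "U \<in> carrier_mat n n" and Wc: "W \<in> carrier_mat n n"
    using U W by (auto intro: unitary_mat_carrier)
  then have [simp]: "dim_row U = n" "dim_col U = n" "dim_row W = n" "dim_col W = n"
    "dim_row D1 = n" "dim_col D1 = n" "dim_row D2 = n" "dim_col D2 = n" "dim_row T = n" "dim_col T = n"
    using D1 D2 T by auto
  have UU: "U * mat_adjoint U = 1\<^sub>m n" and WW: "W * mat_adjoint W = 1\<^sub>m n"
    using U W unfolding unitary_mat_def by auto
  define \<phi> where "\<phi> = mat_adjoint U * T * W"
  have \<phi>: "\<phi> \<in> carrier_mat n n"
    unfolding \<phi>_def by (rule mult_carrier_mat[OF mult_carrier_mat[OF mat_adjoint_carrier[OF Uc] T] Wc])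
  have D1\<phi>: "D1 * \<phi> \<in> carrier_mat n n" and \<phi>D2: "\<phi> * D2 \<in> carrier_mat n n"
    using mult_carrier_mat[OF D1 \<phi>] mult_carrier_mat[OF \<phi> D2] .
  have "U * (D1 * \<phi> - \<phi> * D2) * mat_adjoint W = (U * (D1 * \<phi>) - U * (\<phi> * D2)) * mat_adjoint W"
    by (simp only: mult_minus_distrib_mat[OF Uc D1\<phi> \<phi>D2])
  also have "\<dots> = U * (D1 * \<phi>) * mat_adjoint W - U * (\<phi> * D2) * mat_adjoint W"
    by (rule minus_mult_distrib_mat[OF mult_carrier_mat[OF Uc D1\<phi>] mult_carrier_mat[OF Uc \<phi>D2]
          mat_adjoint_carrier[OF Wc]])
  also have "U * (D1 * \<phi>) * mat_adjoint W = U * D1 * mat_adjoint U * T * (W * mat_adjoint W)"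
    unfolding \<phi>_def by (simp add: assoc_mult_mat_dims)
  also have "U * (\<phi> * D2) * mat_adjoint W = (U * mat_adjoint U) * (T * (W * D2 * mat_adjoint W))"
    unfolding \<phi>_def by (simp add: assoc_mult_mat_dims)
  finally show ?thesis unfolding \<phi>_def UU WW by simp
qed

lemma unitary_conj_cancel:
  assumes U: "unitary_mat n U" and W: "unitary_mat n W" and B: "B \<in> carrier_mat n n"
  shows "mat_adjoint U * (U * B * mat_adjoint W) * W = B"
proof -
  have "U \<in> carrier_mat n n" "W \<in> carrier_mat n n"
    using U W by (auto intro: unitary_mat_carrier)
  then have [simp]: "dim_row U = n" "dim_col U = n" "dim_row W = n" "dim_col W = n"
    "dim_row B = n" "dim_col B = n"
    using B by auto
  have "mat_adjoint U * (U * B * mat_adjoint W) * W = (mat_adjoint U * U) * B * (mat_adjoint W * W)"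
    by (simp add: assoc_mult_mat_dims)
  then show ?thesis using U W unfolding unitary_mat_def by simp
qed

lemma Lambda_powr_commutator_bound:
  assumes \<phi>: "\<phi> \<in> carrier_mat n n" and x: "\<forall>i<n. 0 \<le> x i" and y: "\<forall>i<n. 0 \<le> y i"
    and s: "0 < s" "s \<le> 1"
    and D: "norm_bound (Lambda n x * \<phi> - \<phi> * Lambda n y) D" and K: "norm_bound \<phi> K"
  shows "norm_bound (Lambda n (\<lambda>i. x i powr s) * \<phi> - \<phi> * Lambda n (\<lambda>i. y i powr s)) (D powr s * (1 + K))"
proof (rule norm_boundI)
  fix k m assume "k < dim_row (Lambda n (\<lambda>i. x i powr s) * \<phi> - \<phi> * Lambda n (\<lambda>i. y i powr s))"
    "m < dim_col (Lambda n (\<lambda>i. x i powr s) * \<phi> - \<phi> * Lambda n (\<lambda>i. y i powr s))"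
  then have k: "k < n" and m: "m < n" using \<phi> by auto
  from \<phi> have [simp]: "dim_row \<phi> = n" "dim_col \<phi> = n" by auto
  have ent: "(Lambda n a * \<phi> - \<phi> * Lambda n b) $$ (k, m) = complex_of_real (a k - b m) * \<phi> $$ (k, m)" for a b
    by (rule Lambda_commutator_index[OF \<phi> k m])
  have "norm ((Lambda n x * \<phi> - \<phi> * Lambda n y) $$ (k, m)) \<le> D"
    using norm_bound_index[OF D] k m by simp
  then have "\<bar>x k - y m\<bar> * norm (\<phi> $$ (k, m)) \<le> D"
    by (simp only: ent norm_mult norm_of_real)
  then have "\<bar>x k powr s - y m powr s\<bar> * norm (\<phi> $$ (k, m)) \<le> D powr s * (1 + norm (\<phi> $$ (k, m)))"
    using x y k m s by (intro abs_powr_diff_mult_le) auto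
  also have "\<dots> \<le> D powr s * (1 + K)"
    using norm_bound_index[OF K, of k m] k m by (intro mult_left_mono) auto
  finally show "norm ((Lambda n (\<lambda>i. x i powr s) * \<phi> - \<phi> * Lambda n (\<lambda>i. y i powr s)) $$ (k, m))
      \<le> D powr s * (1 + K)"
    by (simp only: ent norm_mult norm_of_real)
qed

text \<open>A Sylvester-type argument: conjugating \<open>X T - T Z\<close> by the eigenbases of \<open>X\<close> and \<open>Z\<close> turns it
  into the entrywise product of \<open>x\<^sub>k - y\<^sub>m\<close> with a fixed matrix, and \<open>t \<mapsto> t powr s\<close> is Holder
  continuous.\<close>

theorem powr_commutator_norm_bound:
  assumes U: "unitary_mat n U" and X: "X = U * Lambda n x * mat_adjoint U" and x: "\<forall>i<n. 0 \<le> x i"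
    and W: "unitary_mat n W" and Z: "Z = W * Lambda n y * mat_adjoint W" and y: "\<forall>i<n. 0 \<le> y i"
    and T: "T \<in> carrier_mat n n" and s: "0 < s" "s \<le> 1"
    and D: "norm_bound (X * T - T * Z) D" and K: "norm_bound T K"
  shows "norm_bound (U * Lambda n (\<lambda>i. x i powr s) * mat_adjoint U * T - T * (W * Lambda n (\<lambda>i. y i powr s) * mat_adjoint W))
    (real n ^ 2 * ((real n ^ 2 * D) powr s * (1 + real n ^ 2 * K)))"
proof -
  have Uc: "U \<in> carrier_mat n n" and Wc: "W \<in> carrier_mat n n"
    using U W by (auto intro: unitary_mat_carrier)
  define \<phi> where "\<phi> = mat_adjoint U * T * W"
  have UT: "mat_adjoint U * T \<in> carrier_mat n n" by (rule mult_carrier_mat[OF mat_adjoint_carrier[OF Uc] T])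
  have \<phi>: "\<phi> \<in> carrier_mat n n" unfolding \<phi>_def by (rule mult_carrier_mat[OF UT Wc])
  have comm: "U * (Lambda n a * \<phi> - \<phi> * Lambda n b) * mat_adjoint W
      = U * Lambda n a * mat_adjoint U * T - T * (W * Lambda n b * mat_adjoint W)" for a b
    unfolding \<phi>_def by (rule unitary_conj_commutator[OF U W Lambda_carrier Lambda_carrier T])
  have diff: "Lambda n a * \<phi> - \<phi> * Lambda n b \<in> carrier_mat n n" for a b
    by (rule minus_carrier_mat[OF mult_carrier_mat[OF \<phi> Lambda_carrier]])
  have U': "norm_bound (mat_adjoint U) 1" and U1: "norm_bound U 1" and W': "norm_bound (mat_adjoint W) 1"
    and W1: "norm_bound W 1"
    using U W by (auto intro: norm_bound_unitary norm_bound_mat_adjoint)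
  have XTZ: "X * T - T * Z \<in> carrier_mat n n"
    unfolding Z by (rule minus_carrier_mat[OF mult_carrier_mat[OF T mult_carrier_mat[OF
          mult_carrier_mat[OF Wc Lambda_carrier] mat_adjoint_carrier[OF Wc]]]])
  have "norm_bound (mat_adjoint U * (X * T - T * Z) * W) (real n * (real n * 1 * D) * 1)"
    by (rule norm_bound_mult_square[OF mult_carrier_mat[OF mat_adjoint_carrier[OF Uc] XTZ] Wc
          norm_bound_mult_square[OF mat_adjoint_carrier[OF Uc] XTZ U' D] W1])
  then have D': "norm_bound (Lambda n x * \<phi> - \<phi> * Lambda n y) (real n ^ 2 * D)"
    unfolding X Z comm[symmetric] unitary_conj_cancel[OF U W diff] by (simp add: power2_eq_square mult.assoc)
  have "norm_bound \<phi> (real n * (real n * 1 * K) * 1)"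
    unfolding \<phi>_def
    by (rule norm_bound_mult_square[OF UT Wc norm_bound_mult_square[OF mat_adjoint_carrier[OF Uc] T U' K] W1])
  then have K': "norm_bound \<phi> (real n ^ 2 * K)" by (simp add: power2_eq_square mult.assoc)
  have "norm_bound (U * (Lambda n (\<lambda>i. x i powr s) * \<phi> - \<phi> * Lambda n (\<lambda>i. y i powr s)) * mat_adjoint W)
      (real n * (real n * 1 * ((real n ^ 2 * D) powr s * (1 + real n ^ 2 * K))) * 1)"
    by (rule norm_bound_mult_square[OF mult_carrier_mat[OF Uc diff] mat_adjoint_carrier[OF Wc]
          norm_bound_mult_square[OF Uc diff U1 Lambda_powr_commutator_bound[OF \<phi> x y s D' K']] W'])
  then show ?thesis unfolding comm by (simp add: power2_eq_square mult.assoc)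
qed

subsection \<open>Compressing by the Riesz projection\<close>

lemma dist_ge_if_indicator_ball_neq:
  fixes a w c :: complex
  assumes gap: "g \<le> \<bar>cmod (a - c) - \<rho>\<bar>"
    and neq: "(indicator (ball c \<rho>) w :: real) \<noteq> indicator (ball c \<rho>) a"
  shows "g \<le> cmod (w - a)"
proof -
  have tri: "cmod (a - c) \<le> cmod (w - a) + cmod (w - c)" "cmod (w - c) \<le> cmod (w - a) + cmod (a - c)"
    using norm_triangle_ineq[of "a - w" "w - c"] norm_triangle_ineq[of "w - a" "a - c"]
    by (simp_all add: norm_minus_commute)
  show ?thesis
  proof (cases "w \<in> ball c \<rho>")
    case True
    with neq have "a \<notin> ball c \<rho>" by (auto simp: indicator_def)
    with True show ?thesis using gap tri by (auto simp: dist_norm norm_minus_commute)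
  next
    case False
    with neq have "a \<in> ball c \<rho>" by (auto simp: indicator_def)
    with False show ?thesis using gap tri by (auto simp: dist_norm norm_minus_commute)
  qed
qed

text \<open>The three summands come from bounding \<open>X\<^sup>s (Q - Q P)\<close>, \<open>X\<^sup>s T - T Z\<^sup>s\<close> and
  \<open>(Q - P) Z\<^sup>s\<close>; \<open>real n / g\<close> is the bound on mismatched eigenvector entries per unit of \<open>b\<close>.\<close>

definition compression_const :: "nat \<Rightarrow> real \<Rightarrow> real \<Rightarrow> real" where
  "compression_const n g s = real n * (real n ^ 3 * (real n / g) * (real n ^ 6) powr s
     + real n ^ 2 * (1 + real n ^ 4) * (real n ^ 6 * (real n / g) ^ 2) powr s
     + real n ^ 3 * (real n / g) * (real n ^ 2) powr s)"

locale riesz_compression =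
  fixes n :: nat and \<alpha> \<mu> :: "nat \<Rightarrow> real" and c :: complex and \<rho> g b :: real
    and E Z V :: "complex mat"
  assumes \<rho>: "0 < \<rho>" and centre: "cmod c < \<rho>" and g: "0 < g"
    and gap: "\<forall>i<n. g \<le> \<bar>cmod (complex_of_real (\<alpha> i) - c) - \<rho>\<bar>"
    and E: "E \<in> carrier_mat n n" and E_small: "mnorm n E \<le> b"
    and V: "unitary_mat n V" and M: "Lambda n \<alpha> + E = V * Lambda n \<mu> * mat_adjoint V"
    and sphere: "\<forall>z\<in>sphere c \<rho>. \<not> eigenvalue (Lambda n \<alpha> + E) z"
    and Z: "psd_mat n Z" and Z_small: "mnorm n Z \<le> b" and Z_ker: "Lambda n \<alpha> * Z = 0\<^sub>m n n"
begin

abbreviation in_disc :: "real \<Rightarrow> real" where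
  "in_disc t \<equiv> indicator (ball c \<rho>) (complex_of_real t)"

definition Q :: "complex mat" where "Q = riesz_proj n c \<rho> (Lambda n \<alpha> + E)"

definition P :: "complex mat" where "P = Lambda n (\<lambda>i. in_disc (\<alpha> i))"

lemma V_carrier: "V \<in> carrier_mat n n" and Z_carrier: "Z \<in> carrier_mat n n"
  and P_carrier: "P \<in> carrier_mat n n"
  using V Z unitary_mat_carrier unfolding psd_mat_def hermitian_mat_def P_def by auto

lemma carrier_dims [simp]:
  "dim_row V = n" "dim_col V = n" "dim_row E = n" "dim_col E = n" "dim_row Z = n" "dim_col Z = n"
  "dim_row P = n" "dim_col P = n"
  using V_carrier E Z_carrier P_carrier by auto

lemma b_nonneg: "0 \<le> b"
  using E_small unfolding mnorm_def by (meson order_trans real_sqrt_ge_zero sum_nonneg zero_le_power2)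

lemma Q_spectral: "Q = V * Lambda n (\<lambda>k. in_disc (\<mu> k)) * mat_adjoint V"
  unfolding Q_def by (rule riesz_proj_spectral[OF V M sphere \<rho>])

lemma Q_carrier: "Q \<in> carrier_mat n n"
  unfolding Q_spectral by (rule mult_carrier_mat[OF mult_carrier_mat[OF V_carrier Lambda_carrier] mat_adjoint_carrier[OF V_carrier]])

lemma eigenvector_equation:
  assumes i: "i < n" and k: "k < n"
  shows "complex_of_real (\<mu> k - \<alpha> i) * V $$ (i, k) = (E * V) $$ (i, k)"
proof -
  have "(Lambda n \<alpha> + E) * V = V * Lambda n \<mu>"
    by (rule conj_unitary_mult_right[OF V Lambda_carrier M])
  moreover have "(Lambda n \<alpha> + E) * V = Lambda n \<alpha> * V + E * V"
    by (rule add_mult_distrib_mat[OF Lambda_carrier E V_carrier])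
  ultimately have "(Lambda n \<alpha> * V) $$ (i, k) + (E * V) $$ (i, k) = (V * Lambda n \<mu>) $$ (i, k)"
    using i k by (metis carrier_dims index_add_mat(1) index_mult_mat(2,3))
  then show ?thesis
    unfolding Lambda_def mat_diag_mult_index[OF V_carrier i k] mult_mat_diag_index[OF V_carrier i k]
    by (simp add: algebra_simps)
qed

lemma eigenvector_entry_small:
  assumes i: "i < n" and k: "k < n"
  shows "cmod (V $$ (i, k)) * \<bar>in_disc (\<mu> k) - in_disc (\<alpha> i)\<bar> \<le> real n / g * b"
proof (cases "in_disc (\<mu> k) = in_disc (\<alpha> i)")
  case True
  then show ?thesis using g b_nonneg by simp
next
  case False
  then have "g \<le> cmod (complex_of_real (\<mu> k) - complex_of_real (\<alpha> i))"
    using gap i by (intro dist_ge_if_indicator_ball_neq) auto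
  then have "g * cmod (V $$ (i, k)) \<le> cmod ((E * V) $$ (i, k))"
    unfolding eigenvector_equation[OF i k, symmetric] norm_mult by (simp add: mult_right_mono)
  also have "\<dots> \<le> real n * mnorm n E * 1"
    by (rule norm_bound_index[OF norm_bound_mult_square[OF E V_carrier norm_bound_mnorm[OF E]
          norm_bound_unitary[OF V]]]) (use i k in simp_all)
  also have "\<dots> \<le> real n * b" using E_small by (simp add: mult_left_mono)
  finally have "g * cmod (V $$ (i, k)) \<le> real n * b" .
  moreover have "\<bar>in_disc (\<mu> k) - in_disc (\<alpha> i)\<bar> = 1"
    using False by (auto simp: indicator_def)
  ultimately show ?thesis using g by (simp add: field_simps mult.commute)
qed

lemma Q_minus_P_index:
  assumes i: "i < n" and j: "j < n"
  shows "(Q - P) $$ (i, j)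
    = (\<Sum>k<n. V $$ (i, k) * complex_of_real (in_disc (\<mu> k) - in_disc (\<alpha> i)) * cnj (V $$ (j, k)))"
proof -
  have "P $$ (i, j) = complex_of_real (in_disc (\<alpha> i)) * (\<Sum>k<n. V $$ (i, k) * cnj (V $$ (j, k)))"
    unfolding unitary_mat_rows[OF V i j] P_def using i j by (simp add: Lambda_index)
  moreover have "Q $$ (i, j) = (\<Sum>k<n. V $$ (i, k) * complex_of_real (in_disc (\<mu> k)) * cnj (V $$ (j, k)))"
    unfolding Q_spectral Lambda_def by (rule conj_mat_diag_index[OF V_carrier i j])
  ultimately show ?thesis
    using i j by (simp add: sum_distrib_left sum_subtractf[symmetric] algebra_simps)
qed

lemma Q_minus_P_norm_bound: "norm_bound (Q - P) (real n * (real n / g * b))"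
proof (rule norm_boundI)
  fix i j assume "i < dim_row (Q - P)" "j < dim_col (Q - P)"
  then have i: "i < n" and j: "j < n" by auto
  have "norm ((Q - P) $$ (i, j))
      \<le> (\<Sum>k<n. cmod (V $$ (i, k)) * \<bar>in_disc (\<mu> k) - in_disc (\<alpha> i)\<bar> * cmod (V $$ (j, k)))"
    unfolding Q_minus_P_index[OF i j] by (rule order_trans[OF norm_sum]) (simp add: norm_mult del: of_real_diff)
  also have "\<dots> \<le> (\<Sum>k<n. real n / g * b * 1)"
  proof (rule sum_mono)
    fix k assume "k \<in> {..<n}"
    then show "cmod (V $$ (i, k)) * \<bar>in_disc (\<mu> k) - in_disc (\<alpha> i)\<bar> * cmod (V $$ (j, k)) \<le> real n / g * b * 1"
      using eigenvector_entry_small[OF i, of k] unitary_mat_index_le_1[OF V j, of k] g b_nonneg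
      by (intro mult_mono[of _ "real n / g * b"]) auto
  qed
  finally show "norm ((Q - P) $$ (i, j)) \<le> real n * (real n / g * b)" by simp
qed

lemma PQP_minus_P_index:
  assumes i: "i < n" and j: "j < n"
  shows "(P * Q * P - P) $$ (i, j) = complex_of_real (in_disc (\<alpha> i) * in_disc (\<alpha> j)) * (Q - P) $$ (i, j)"
proof -
  have "(P * Q * P) $$ (i, j) = complex_of_real (in_disc (\<alpha> i)) * Q $$ (i, j) * complex_of_real (in_disc (\<alpha> j))"
    unfolding P_def Lambda_def
    using mult_mat_diag_index[OF mult_carrier_mat[OF mat_diag_dim Q_carrier] i j]
      mat_diag_mult_index[OF Q_carrier i j] by simp
  then show ?thesis
    using i j Q_carrier by (simp add: P_def Lambda_index indicator_def algebra_simps)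
qed

text \<open>Entries of \<open>P Q P - P\<close> are quadratic in \<open>\<parallel>E\<parallel>\<close>: both eigenvector entries in a term have the wrong
  side of the circle.\<close>

lemma PQP_minus_P_norm_bound: "norm_bound (P * Q * P - P) (real n * (real n / g * b) ^ 2)"
proof (rule norm_boundI)
  fix i j assume "i < dim_row (P * Q * P - P)" "j < dim_col (P * Q * P - P)"
  then have i: "i < n" and j: "j < n" by auto
  show "norm ((P * Q * P - P) $$ (i, j)) \<le> real n * (real n / g * b) ^ 2"
  proof (cases "in_disc (\<alpha> i) = 1 \<and> in_disc (\<alpha> j) = 1")
    case True
    have "norm ((Q - P) $$ (i, j))
        \<le> (\<Sum>k<n. (cmod (V $$ (i, k)) * \<bar>in_disc (\<mu> k) - in_disc (\<alpha> i)\<bar>)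
              * (cmod (V $$ (j, k)) * \<bar>in_disc (\<mu> k) - in_disc (\<alpha> j)\<bar>))"
      unfolding Q_minus_P_index[OF i j] using True
      by (intro order_trans[OF norm_sum] sum_mono) (auto simp: norm_mult indicator_def simp del: of_real_diff)
    also have "\<dots> \<le> (\<Sum>k<n. (real n / g * b) * (real n / g * b))"
    proof (rule sum_mono)
      fix k assume "k \<in> {..<n}"
      then show "cmod (V $$ (i, k)) * \<bar>in_disc (\<mu> k) - in_disc (\<alpha> i)\<bar>
          * (cmod (V $$ (j, k)) * \<bar>in_disc (\<mu> k) - in_disc (\<alpha> j)\<bar>) \<le> (real n / g * b) * (real n / g * b)"
        using eigenvector_entry_small[OF i, of k] eigenvector_entry_small[OF j, of k] g b_nonneg
        by (intro mult_mono[of _ "real n / g * b"]) auto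
    qed
    finally show ?thesis unfolding PQP_minus_P_index[OF i j] using True by (simp add: power2_eq_square)
  next
    case False
    then have "complex_of_real (in_disc (\<alpha> i) * in_disc (\<alpha> j)) = 0" by (auto simp: indicator_def)
    then have "(P * Q * P - P) $$ (i, j) = 0" by (simp only: PQP_minus_P_index[OF i j] mult_zero_left)
    then show ?thesis by simp
  qed
qed

lemma Z_hermitian: "hermitian_mat n Z"
  using Z unfolding psd_mat_def by auto

lemma P_mult_Z: "P * Z = Z"
proof (rule eq_matI)
  fix i j assume "i < dim_row Z" "j < dim_col Z"
  then have i: "i < n" and j: "j < n" by auto
  have "(Lambda n \<alpha> * Z) $$ (i, j) = 0" using Z_ker i j by simp
  then have "complex_of_real (\<alpha> i) * Z $$ (i, j) = 0"
    unfolding Lambda_def mat_diag_mult_index[OF Z_carrier i j] .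
  moreover have "in_disc 0 = 1" using centre by (simp add: indicator_def dist_norm)
  ultimately show "(P * Z) $$ (i, j) = Z $$ (i, j)"
    unfolding P_def Lambda_def mat_diag_mult_index[OF Z_carrier i j] by (cases "\<alpha> i = 0") auto
qed auto

lemma Z_mult_P: "Z * P = Z"
proof (rule eq_matI)
  fix i j assume "i < dim_row Z" "j < dim_col Z"
  then have i: "i < n" and j: "j < n" by auto
  have "complex_of_real (in_disc (\<alpha> j)) * Z $$ (j, i) = Z $$ (j, i)"
    using arg_cong[OF P_mult_Z, of "\<lambda>A. A $$ (j, i)"]
    unfolding P_def Lambda_def mat_diag_mult_index[OF Z_carrier j i] .
  then show "(Z * P) $$ (i, j) = Z $$ (i, j)"
    unfolding P_def Lambda_def mult_mat_diag_index[OF Z_carrier i j]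
      hermitian_mat_index[OF Z_hermitian i j] hermitian_mat_index[OF Z_hermitian j i, symmetric]
    by (metis complex_cnj_complex_of_real complex_cnj_mult mult.commute)
qed auto

lemma Q_hermitian: "mat_adjoint Q = Q"
  unfolding Q_spectral by (rule mat_adjoint_conj_Lambda[OF V_carrier])

lemma Q_idem: "Q * Q = Q"
proof -
  have "(\<lambda>k. complex_of_real (in_disc (\<mu> k)) * complex_of_real (in_disc (\<mu> k))) = (\<lambda>k. complex_of_real (in_disc (\<mu> k)))"
    by (auto simp: indicator_def)
  then show ?thesis
    using conj_mat_diag_mult[OF V_carrier, of "\<lambda>k. complex_of_real (in_disc (\<mu> k))"] V
    unfolding Q_spectral Lambda_def unitary_mat_def by simp
qed

lemma compression_psd: "psd_mat n (Q * Z * Q)"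
  unfolding psd_mat_def
proof (intro conjI ballI)
  show "hermitian_mat n (Q * Z * Q)"
    using hermitian_mat_conj[OF Z_hermitian Q_carrier] unfolding Q_hermitian .
  fix v :: "complex vec" assume v: "v \<in> carrier_vec n"
  have Qv: "Q *\<^sub>v v \<in> carrier_vec n" using Q_carrier v by simp
  have "Q * Z * Q *\<^sub>v v = Q *\<^sub>v (Z *\<^sub>v (Q *\<^sub>v v))"
    using Q_carrier Z_carrier v by (simp add: assoc_mult_mat_vec[of _ n n _ n])
  then have "conjugate v \<bullet> (Q * Z * Q *\<^sub>v v) = conjugate (Q *\<^sub>v v) \<bullet> (Z *\<^sub>v (Q *\<^sub>v v))"
    using cscalar_mult_mat_vec_adjoint[OF Q_carrier v, of "Z *\<^sub>v (Q *\<^sub>v v)"] Z_carrier Qv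
    by (simp add: Q_hermitian)
  then show "0 \<le> Re (conjugate v \<bullet> (Q * Z * Q *\<^sub>v v))"
    using Z Qv unfolding psd_mat_def by simp
qed

lemma compression_mult_Q: "Q * Z * Q * Q = Q * Z * Q"
  using assoc_mult_mat[OF mult_carrier_mat[OF Q_carrier Z_carrier] Q_carrier Q_carrier] by (simp add: Q_idem)

lemma compression_commutator: "Q * Z * Q * (Q * P) - Q * P * Z = Q * Z * (P * Q * P - P)"
proof -
  have [simp]: "dim_row Q = n" "dim_col Q = n" using Q_carrier by auto
  have "Q * Z * Q * (Q * P) = Q * Z * (Q * Q) * P" by (simp add: assoc_mult_mat_dims)
  also have "\<dots> = Q * (Z * P) * Q * P" unfolding Q_idem Z_mult_P ..
  also have "\<dots> = Q * Z * (P * Q * P)" by (simp add: assoc_mult_mat_dims)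
  finally have 1: "Q * Z * Q * (Q * P) = Q * Z * (P * Q * P)" .
  have "Q * P * Z = Q * Z * P"
    by (simp add: assoc_mult_mat_dims P_mult_Z Z_mult_P)
  moreover have "Q * Z * (P * Q * P - P) = Q * Z * (P * Q * P) - Q * Z * P"
    by (rule mult_minus_distrib_mat[OF mult_carrier_mat[OF Q_carrier Z_carrier]
          mult_carrier_mat[OF mult_carrier_mat[OF P_carrier Q_carrier] P_carrier] P_carrier])
  ultimately show ?thesis using 1 by simp
qed

lemma Q_norm_bound: "norm_bound Q (real n * 1)"
  unfolding Q_spectral by (rule norm_bound_conj_Lambda[OF V]) (auto simp: indicator_def)

lemma P_norm_bound: "norm_bound P 1"
  unfolding P_def norm_bound_def by (auto simp: Lambda_index indicator_def)

lemma Z_norm_bound: "norm_bound Z b"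
  by (rule norm_bound_mono[OF norm_bound_mnorm[OF Z_carrier] Z_small])

lemma compression_norm_bound: "norm_bound (Q * Z * Q) (real n ^ 4 * b)"
proof -
  have "norm_bound (Q * Z * Q) (real n * (real n * (real n * 1) * b) * (real n * 1))"
    by (rule norm_bound_mult_square[OF mult_carrier_mat[OF Q_carrier Z_carrier] Q_carrier
          norm_bound_mult_square[OF Q_carrier Z_carrier Q_norm_bound Z_norm_bound] Q_norm_bound])
  then show ?thesis by (simp add: eval_nat_numeral mult_ac)
qed

lemma compression_commutator_norm_bound:
  "norm_bound (Q * Z * Q * (Q * P) - Q * P * Z) (real n ^ 4 * (real n / g) ^ 2 * b ^ 3)"
proof -
  have "norm_bound (Q * Z * (P * Q * P - P)) (real n * (real n * (real n * 1) * b) * (real n * (real n / g * b) ^ 2))"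
    by (rule norm_bound_mult_square[OF mult_carrier_mat[OF Q_carrier Z_carrier]
          minus_carrier_mat[OF P_carrier] norm_bound_mult_square[OF Q_carrier Z_carrier Q_norm_bound Z_norm_bound]
          PQP_minus_P_norm_bound])
  then show ?thesis unfolding compression_commutator by (simp add: eval_nat_numeral power_mult_distrib mult_ac)
qed

lemma Q_mult_I_minus_P_norm_bound: "norm_bound (Q * (1\<^sub>m n - P)) (real n * (real n / g * b))"
proof (rule norm_boundI)
  have IP: "1\<^sub>m n - P = mat_diag n (\<lambda>i. complex_of_real (1 - in_disc (\<alpha> i)))"
    unfolding P_def Lambda_def by (auto intro!: eq_matI simp: mat_diag_def)
  fix i j assume "i < dim_row (Q * (1\<^sub>m n - P))" "j < dim_col (Q * (1\<^sub>m n - P))"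
  then have i: "i < n" and j: "j < n" using Q_carrier by auto
  have "(Q * (1\<^sub>m n - P)) $$ (i, j) = Q $$ (i, j) * complex_of_real (1 - in_disc (\<alpha> j))"
    unfolding IP by (rule mult_mat_diag_index[OF Q_carrier i j])
  also have "\<dots> = (Q - P) $$ (i, j) * complex_of_real (1 - in_disc (\<alpha> j))"
    using i j Q_carrier by (simp add: P_def Lambda_index indicator_def)
  finally have "norm ((Q * (1\<^sub>m n - P)) $$ (i, j)) \<le> norm ((Q - P) $$ (i, j))"
    by (simp add: norm_mult indicator_def)
  also have "\<dots> \<le> real n * (real n / g * b)"
    using norm_bound_index[OF Q_minus_P_norm_bound] i j P_carrier by simp
  finally show "norm ((Q * (1\<^sub>m n - P)) $$ (i, j)) \<le> real n * (real n / g * b)" .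
qed

lemma compression_telescope_left:
  assumes A: "A \<in> carrier_mat n n" and AQ: "A * Q = A"
  shows "A - A * (Q * P) = A * (Q * (1\<^sub>m n - P))"
proof -
  have "A * (Q * (1\<^sub>m n - P)) = A * (Q * 1\<^sub>m n - Q * P)"
    by (simp only: mult_minus_distrib_mat[OF Q_carrier one_carrier_mat P_carrier])
  also have "\<dots> = A * Q - A * (Q * P)"
    using mult_minus_distrib_mat[OF A Q_carrier mult_carrier_mat[OF Q_carrier P_carrier]] Q_carrier by simp
  finally show ?thesis unfolding AQ ..
qed

lemma compression_telescope_right:
  assumes B: "B \<in> carrier_mat n n" and PB: "P * B = B"
  shows "Q * P * B - B = (Q - P) * B"
  using minus_mult_distrib_mat[OF Q_carrier P_carrier B] assoc_mult_mat[OF Q_carrier P_carrier B] PB by simp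

lemma compression_power_left_norm_bound:
  assumes U: "unitary_mat n U" and X: "Q * Z * Q = U * Lambda n x * mat_adjoint U"
    and x: "\<forall>i<n. 0 \<le> x i" and s: "0 < s"
  defines "Xs \<equiv> U * Lambda n (\<lambda>i. x i powr s) * mat_adjoint U"
  shows "norm_bound (Xs - Xs * (Q * P)) (real n ^ 3 * (real n / g) * b * (real n ^ 6 * b) powr s)"
proof -
  have Uc: "U \<in> carrier_mat n n" using U by (rule unitary_mat_carrier)
  have Xs: "Xs \<in> carrier_mat n n"
    unfolding Xs_def by (rule mult_carrier_mat[OF mult_carrier_mat[OF Uc Lambda_carrier] mat_adjoint_carrier[OF Uc]])
  have "Xs * Q = Xs"
    unfolding Xs_def by (rule spectral_fun_mult_right[OF U X Q_carrier compression_mult_Q, where f = "\<lambda>t. t powr s"]) simp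
  then have "Xs - Xs * (Q * P) = Xs * (Q * (1\<^sub>m n - P))"
    by (rule compression_telescope_left[OF Xs])
  moreover have "real n ^ 2 * (real n ^ 4 * b) = real n ^ 6 * b" by (simp add: eval_nat_numeral mult_ac)
  then have "norm_bound Xs (real n * (real n ^ 6 * b) powr s)"
    using powr_norm_bound[OF U X x compression_norm_bound, of s] s unfolding Xs_def by simp
  then have "norm_bound (Xs * (Q * (1\<^sub>m n - P)))
      (real n * (real n * (real n ^ 6 * b) powr s) * (real n * (real n / g * b)))"
    by (rule norm_bound_mult_square[OF Xs mult_carrier_mat[OF Q_carrier minus_carrier_mat[OF P_carrier]] _
          Q_mult_I_minus_P_norm_bound])
  ultimately show ?thesis by (simp add: eval_nat_numeral mult_ac)
qed

lemma compression_power_right_norm_bound: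
  assumes W: "unitary_mat n W" and Zd: "Z = W * Lambda n y * mat_adjoint W"
    and y: "\<forall>i<n. 0 \<le> y i" and s: "0 < s"
  defines "Zs \<equiv> W * Lambda n (\<lambda>i. y i powr s) * mat_adjoint W"
  shows "norm_bound (Q * P * Zs - Zs) (real n ^ 3 * (real n / g) * b * (real n ^ 2 * b) powr s)"
proof -
  have Wc: "W \<in> carrier_mat n n" using W by (rule unitary_mat_carrier)
  have Zs: "Zs \<in> carrier_mat n n"
    unfolding Zs_def by (rule mult_carrier_mat[OF mult_carrier_mat[OF Wc Lambda_carrier] mat_adjoint_carrier[OF Wc]])
  have "P * Zs = Zs"
    unfolding Zs_def by (rule spectral_fun_mult_left[OF W Zd P_carrier P_mult_Z, where f = "\<lambda>t. t powr s"]) simp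
  then have "Q * P * Zs - Zs = (Q - P) * Zs"
    by (rule compression_telescope_right[OF Zs])
  moreover have "norm_bound ((Q - P) * Zs) (real n * (real n * (real n / g * b)) * (real n * (real n ^ 2 * b) powr s))"
    by (rule norm_bound_mult_square[OF minus_carrier_mat[OF P_carrier] Zs Q_minus_P_norm_bound])
      (unfold Zs_def, rule powr_norm_bound[OF W Zd y Z_norm_bound], use s in simp)
  ultimately show ?thesis by (simp add: eval_nat_numeral mult_ac)
qed

lemma compression_power_commutator_norm_bound:
  assumes U: "unitary_mat n U" and X: "Q * Z * Q = U * Lambda n x * mat_adjoint U" and x: "\<forall>i<n. 0 \<le> x i"
    and W: "unitary_mat n W" and Zd: "Z = W * Lambda n y * mat_adjoint W" and y: "\<forall>i<n. 0 \<le> y i"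
    and s: "0 < s" "s \<le> 1"
  shows "norm_bound (U * Lambda n (\<lambda>i. x i powr s) * mat_adjoint U * (Q * P)
      - Q * P * (W * Lambda n (\<lambda>i. y i powr s) * mat_adjoint W))
    (real n ^ 2 * (1 + real n ^ 4) * (real n ^ 6 * (real n / g) ^ 2 * b ^ 3) powr s)"
proof -
  have "norm_bound (U * Lambda n (\<lambda>i. x i powr s) * mat_adjoint U * (Q * P)
      - Q * P * (W * Lambda n (\<lambda>i. y i powr s) * mat_adjoint W))
      (real n ^ 2 * ((real n ^ 2 * (real n ^ 4 * (real n / g) ^ 2 * b ^ 3)) powr s
        * (1 + real n ^ 2 * (real n * (real n * 1) * 1))))"
    by (rule powr_commutator_norm_bound[OF U X x W Zd y mult_carrier_mat[OF Q_carrier P_carrier] s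
          compression_commutator_norm_bound norm_bound_mult_square[OF Q_carrier P_carrier Q_norm_bound P_norm_bound]])
  then show ?thesis by (simp add: eval_nat_numeral mult_ac)
qed

theorem psd_power_compression_norm_bound:
  assumes s: "0 < s" "s \<le> 1"
  shows "norm_bound (psd_power n s (Q * Z * Q) - psd_power n s Z)
    (real n ^ 3 * (real n / g) * b * (real n ^ 6 * b) powr s
      + real n ^ 2 * (1 + real n ^ 4) * (real n ^ 6 * (real n / g) ^ 2 * b ^ 3) powr s
      + real n ^ 3 * (real n / g) * b * (real n ^ 2 * b) powr s)"
proof -
  obtain U x where U: "unitary_mat n U" and x: "\<forall>i<n. 0 \<le> x i"
    and X: "Q * Z * Q = U * Lambda n x * mat_adjoint U"
    and Xs: "psd_power n s (Q * Z * Q) = U * Lambda n (\<lambda>i. x i powr s) * mat_adjoint U"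
    by (rule psd_power_spectral[OF compression_psd])
  obtain W y where W: "unitary_mat n W" and y: "\<forall>i<n. 0 \<le> y i"
    and Zd: "Z = W * Lambda n y * mat_adjoint W"
    and Zs: "psd_power n s Z = W * Lambda n (\<lambda>i. y i powr s) * mat_adjoint W"
    by (rule psd_power_spectral[OF Z])
  have Xs_c: "U * Lambda n (\<lambda>i. x i powr s) * mat_adjoint U \<in> carrier_mat n n"
    and Zs_c: "W * Lambda n (\<lambda>i. y i powr s) * mat_adjoint W \<in> carrier_mat n n"
    using psd_power_carrier[OF compression_psd, of s] psd_power_carrier[OF Z, of s] unfolding Xs Zs .
  have QP: "Q * P \<in> carrier_mat n n" by (rule mult_carrier_mat[OF Q_carrier P_carrier])
  from norm_bound_telescope[OF mult_carrier_mat[OF Xs_c QP] mult_carrier_mat[OF QP Zs_c] Zs_c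
      compression_power_left_norm_bound[OF U X x s(1)] compression_power_commutator_norm_bound[OF U X x W Zd y s]
      compression_power_right_norm_bound[OF W Zd y s(1)]]
  show ?thesis unfolding Xs Zs .
qed

theorem mnorm_psd_power_compression_le:
  assumes s: "0 < s" "s \<le> 1" and b: "0 < b" "b \<le> 1"
  shows "mnorm n (psd_power n s (Q * Z * Q) - psd_power n s Z) \<le> compression_const n g s * b powr min (1 + s) (3 * s)"
proof -
  have "mnorm n (psd_power n s (Q * Z * Q) - psd_power n s Z)
      \<le> real n * (real n ^ 3 * (real n / g) * b * (real n ^ 6 * b) powr s
        + real n ^ 2 * (1 + real n ^ 4) * (real n ^ 6 * (real n / g) ^ 2 * b ^ 3) powr s
        + real n ^ 3 * (real n / g) * b * (real n ^ 2 * b) powr s)"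
    by (rule mnorm_le_norm_bound[OF minus_carrier_mat[OF psd_power_carrier[OF Z]]
          psd_power_compression_norm_bound[OF s]]) (use g b in simp)
  also have "\<dots> \<le> compression_const n g s * b powr min (1 + s) (3 * s)"
    unfolding compression_const_def mult.assoc[of "real n"]
    by (intro mult_left_mono powr_terms_le_powr_min) (use g b s in auto)
  finally show ?thesis .
qed

end

subsection \<open>Uniformity in the diagonal entries\<close>

lemma uniform_circle_gap:
  fixes ap :: "nat \<Rightarrow> real"
  assumes c: "cmod c < \<rho>" and ap: "\<forall>i<l. \<rho> < cmod (complex_of_real (ap i) - c)"
  obtains \<delta> g where "0 < \<delta>" "0 < g"
    "\<And>bp i. \<forall>i<l. \<bar>bp i - ap i\<bar> < \<delta> \<Longrightarrow>
      g \<le> \<bar>cmod (complex_of_real (if i < l then bp i else 0) - c) - \<rho>\<bar>"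
proof -
  define S where "S = insert 1 ((\<lambda>i. cmod (complex_of_real (ap i) - c) - \<rho>) ` {..<l})"
  have S: "finite S" "S \<noteq> {}" unfolding S_def by auto
  have pos: "0 < Min S" using ap S unfolding S_def by (subst Min_gr_iff) auto
  have le: "\<rho> + Min S \<le> cmod (complex_of_real (ap i) - c)" if "i < l" for i
  proof -
    have "cmod (complex_of_real (ap i) - c) - \<rho> \<in> S" using that unfolding S_def by auto
    then show ?thesis using Min_le[OF S(1)] by fastforce
  qed
  show ?thesis
  proof (rule that[of "Min S / 2" "min (Min S / 2) (\<rho> - cmod c)"])
    fix bp i assume bp: "\<forall>i<l. \<bar>bp i - ap i\<bar> < Min S / 2"
    show "min (Min S / 2) (\<rho> - cmod c) \<le> \<bar>cmod (complex_of_real (if i < l then bp i else 0) - c) - \<rho>\<bar>"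
    proof (cases "i < l")
      case True
      have "cmod (complex_of_real (ap i) - c)
          \<le> cmod (complex_of_real (ap i) - complex_of_real (bp i)) + cmod (complex_of_real (bp i) - c)"
        using norm_triangle_ineq[of "complex_of_real (ap i) - complex_of_real (bp i)" "complex_of_real (bp i) - c"]
        by simp
      also have "cmod (complex_of_real (ap i) - complex_of_real (bp i)) = \<bar>bp i - ap i\<bar>"
        by (metis abs_minus_commute norm_of_real of_real_diff)
      finally have "min (Min S / 2) (\<rho> - cmod c) \<le> cmod (complex_of_real (bp i) - c) - \<rho>"
        using le[OF True] bp[rule_format, OF True] min.cobounded1[of "Min S / 2" "\<rho> - cmod c"] by linarith
      then show ?thesis using True by simp
    qed (simp add: norm_minus_commute)
  qed (use pos c in auto)
qed

theorem mnorm_psd_power_riesz_compression_le: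
  assumes "0 < \<rho>" "cmod c < \<rho>" "0 < g" "\<forall>i<n. g \<le> \<bar>cmod (complex_of_real (\<alpha> i) - c) - \<rho>\<bar>"
    and E: "hermitian_mat n E" "mnorm n E \<le> b" and "\<forall>z\<in>sphere c \<rho>. \<not> eigenvalue (Lambda n \<alpha> + E) z"
    and Z: "psd_mat n Z" "mnorm n Z \<le> b" and ker: "\<forall>v\<in>carrier_vec n. Lambda n \<alpha> *\<^sub>v (Z *\<^sub>v v) = 0\<^sub>v n"
    and s: "0 < s" "s \<le> 1" and b: "0 < b" "b \<le> 1"
  shows "mnorm n (psd_power n s (riesz_proj n c \<rho> (Lambda n \<alpha> + E) * Z * riesz_proj n c \<rho> (Lambda n \<alpha> + E))
      - psd_power n s Z) \<le> compression_const n g s * b powr min (1 + s) (3 * s)"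
proof -
  obtain V \<mu> where "unitary_mat n V" "Lambda n \<alpha> + E = V * Lambda n \<mu> * mat_adjoint V"
    using hermitian_mat_spectral[OF hermitian_mat_Lambda_add[OF E(1)]] by blast
  moreover have "Lambda n \<alpha> * Z = 0\<^sub>m n n"
    using Z ker by (intro mult_mat_eq_zero_if_mult_vec) (auto simp: psd_mat_def hermitian_mat_def)
  ultimately interpret riesz_compression n \<alpha> \<mu> c \<rho> g b E Z V
    using assms by unfold_locales (auto simp: hermitian_mat_def)
  show ?thesis using mnorm_psd_power_compression_le[OF s b] unfolding Q_def .
qed

theorem lemma3p3:
  fixes n l :: nat and p r :: real and ap :: "nat \<Rightarrow> real"
    and c :: complex and \<rho> :: real
  assumes "1 < p" and "p < 3" and "r = min (1 + 1/p) (3/p)"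
    and "l \<le> n" and "\<forall>i<l. 0 < ap i"
    and "0 < \<rho>" and "cmod c < \<rho>" and "\<forall>i<l. \<rho> < cmod (complex_of_real (ap i) - c)"
  shows "\<exists>\<delta>>0. \<exists>C. \<exists>b0>0. \<forall>bp :: nat \<Rightarrow> real.
     (\<forall>i<l. \<bar>bp i - ap i\<bar> < \<delta>) \<longrightarrow>
     (let \<alpha> = (\<lambda>i. if i < l then bp i else 0) in
      \<forall>E Z b. hermitian_mat n E \<longrightarrow> psd_mat n Z
        \<longrightarrow> (\<forall>v \<in> carrier_vec n. Lambda n \<alpha> *\<^sub>v (Z *\<^sub>v v) = 0\<^sub>v n)
        \<longrightarrow> (\<forall>z \<in> sphere c \<rho>. \<not> eigenvalue (Lambda n \<alpha> + E) z)
        \<longrightarrow> 0 < b \<longrightarrow> b \<le> b0 \<longrightarrow> mnorm n E \<le> b \<longrightarrow> mnorm n Z \<le> b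
        \<longrightarrow> mnorm n (psd_power n (1/p)
                       (riesz_proj n c \<rho> (Lambda n \<alpha> + E) * Z * riesz_proj n c \<rho> (Lambda n \<alpha> + E))
                     - psd_power n (1/p) Z) \<le> C * b powr r)"
proof -
  obtain \<delta> g where \<delta>: "0 < \<delta>" and g: "0 < g"
    and gap: "\<And>bp i. \<forall>i<l. \<bar>bp i - ap i\<bar> < \<delta> \<Longrightarrow>
      g \<le> \<bar>cmod (complex_of_real (if i < l then bp i else 0) - c) - \<rho>\<bar>"
    using uniform_circle_gap[OF assms(7,8)] by blast
  have s: "0 < 1 / p" "1 / p \<le> 1" and r: "r = min (1 + 1 / p) (3 * (1 / p))"
    using assms(1,3) by auto
  show ?thesis unfolding Let_def
  proof (rule exI[of _ \<delta>], rule conjI[OF \<delta>], rule exI[of _ "compression_const n g (1 / p)"],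
      rule exI[of _ 1], rule conjI, simp, intro allI impI)
    fix bp :: "nat \<Rightarrow> real" and E Z :: "complex mat" and b :: real
    let ?\<alpha> = "\<lambda>i. if i < l then bp i else 0"
    assume "\<forall>i<l. \<bar>bp i - ap i\<bar> < \<delta>" and hyps: "hermitian_mat n E" "psd_mat n Z"
      "\<forall>v\<in>carrier_vec n. Lambda n ?\<alpha> *\<^sub>v (Z *\<^sub>v v) = 0\<^sub>v n"
      "\<forall>z\<in>sphere c \<rho>. \<not> eigenvalue (Lambda n ?\<alpha> + E) z"
      and b: "0 < b" "b \<le> 1" and small: "mnorm n E \<le> b" "mnorm n Z \<le> b"
    from this(1) have "\<forall>i<n. g \<le> \<bar>cmod (complex_of_real (?\<alpha> i) - c) - \<rho>\<bar>" by (blast intro: gap)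
    from mnorm_psd_power_riesz_compression_le[OF assms(6,7) g this hyps(1) small(1) hyps(4,2) small(2) hyps(3) s b]
    show "mnorm n (psd_power n (1 / p) (riesz_proj n c \<rho> (Lambda n ?\<alpha> + E) * Z
        * riesz_proj n c \<rho> (Lambda n ?\<alpha> + E)) - psd_power n (1 / p) Z) \<le> compression_const n g (1 / p) * b powr r"
      unfolding r .
  qed
qed

end
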